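(* Assume $\gamma<1$. For $(K,\Sigma)\in\Omega$, $$\nabla_Kf(K,\Sigma)=E_KS_{K,\Sigma},\qquad \nabla_\Sigma f(K,\Sigma)=(1-\gamma)^{-1}\Big(\big(R+\gamma P_K(B^\top B+D^\top D)\big)^\top-\frac{\tau}{2}\Sigma^{-1}\Big),$$ where $E_K=2RK+2\gamma P_K\big[(B^\top B+D^\top D)K-AB^\top\big]$ and $S_{K,\Sigma}=\sum_{t=0}^\infty\gamma^t\mathbb{E}[x_t^2]$, the expectation being over the trajectory under the policy $u_t\sim\mathcal N(-Kx_t,\Sigma)$ with $x_0\sim\mathcal D$.
   Context: Setting: $n\ge1$, $A,C\in\mathbb{R}$, $B\in\mathbb{R}^{1\times n}$ (row vector), $D\in\mathbb{R}^{n\times n}$, $Q\in\mathbb{R}$, $R\in\mathbb{R}^{n\times n}$ symmetric, $\gamma\in(0,1)$, $\tau>0$. Dynamics $x_{t+1}=(A+w_t^xC)x_t+(B+w_t^uD)u_t$ with $x_t\in\mathbb{R}$, $u_t\in\mathbb{R}^n$, white noises $w_t^x\in\mathbb{R}$, $w_t^u\in\mathbb{R}^{1\times n}$ independent across time, of each other and of the controls, $\mathbb{E}w_t^x=0$, $\mathbb{E}(w_t^x)^2=1$, $\mathbb{E}w_t^u=0$, $\mathbb{E}[(w_t^u)^\top w_t^u]=I_n$. Policy parameters: $K\in\mathbb{R}^n$, $\Sigma$ symmetric positive definite; $u_t\sim\mathcal N(-Kx_t,\Sigma)$. $V_K=A^2+C^2+K^\top(B^\top B+D^\top D)K-2ABK$,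 $\Omega=\{(K,\Sigma):\Sigma=\Sigma^\top\succ0,\ \gamma V_K<1\}$. Initial state $x_0\sim\mathcal D$, $\mu=\mathbb{E}x_0^2$. Cost $f(K,\Sigma)=\mathbb{E}\big[\sum_{t\ge0}\gamma^t(Qx_t^2+u_t^\top Ru_t+\tau\log\pi_{K,\Sigma}(u_t|x_t))\big]$ with $\pi_{K,\Sigma}(\cdot|x)$ the density of $\mathcal N(-Kx,\Sigma)$. $P_K=(Q+K^\top RK)/(1-\gamma V_K)$ (the solution of $P_K=Q+K^\top RK+\gamma P_KV_K$). Gradients are with respect to the entries of $K$ and of $\Sigma$. *)

theory Defs
  imports "HOL-Analysis.Analysis" "HOL-Probability.Probability"
begin

text \<open>Dimension n = CARD('n). Row vectors (B, w^u) and column vectors (K, u) are both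
  represented as real^'n; B u is the inner product B \<bullet> u, and w^u D is w^u v* D.\<close>

definition pos_def_mat :: "real^'n^'n \<Rightarrow> bool" where
  "pos_def_mat S \<longleftrightarrow> transpose S = S \<and> (\<forall>v. v \<noteq> 0 \<longrightarrow> v \<bullet> (S *v v) > 0)"

definition Mmat :: "real^'n \<Rightarrow> real^'n^'n \<Rightarrow> real^'n^'n" where
  "Mmat B D = (\<chi> i j. B $ i * B $ j) + transpose D ** D"

definition VK :: "real \<Rightarrow> real^'n \<Rightarrow> real \<Rightarrow> real^'n^'n \<Rightarrow> real^'n \<Rightarrow> real" where
  "VK A B C D K = A\<^sup>2 + C\<^sup>2 + K \<bullet> (Mmat B D *v K) - 2 * A * (B \<bullet> K)"

definition Omega :: "real \<Rightarrow> real \<Rightarrow> real^'n \<Rightarrow> real \<Rightarrow> real^'n^'n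
    \<Rightarrow> ((real^'n) \<times> (real^'n^'n)) set" where
  "Omega \<gamma> A B C D = {(K, S). pos_def_mat S \<and> \<gamma> * VK A B C D K < 1}"

definition PK :: "real \<Rightarrow> real \<Rightarrow> real^'n \<Rightarrow> real \<Rightarrow> real^'n^'n \<Rightarrow> real
    \<Rightarrow> real^'n^'n \<Rightarrow> real^'n \<Rightarrow> real" where
  "PK \<gamma> A B C D Q R K = (Q + K \<bullet> (R *v K)) / (1 - \<gamma> * VK A B C D K)"

text \<open>A (fixed) matrix square root L with L L^T = S, used to sample u ~ N(m, S) as m + L \<xi>
  with \<xi> a standard Gaussian vector.\<close>
definition msqrt :: "real^'n^'n \<Rightarrow> real^'n^'n" where
  "msqrt S = (SOME L. L ** transpose L = S)"

definition gauss_logpdf :: "real^'n^'n \<Rightarrow> real^'n \<Rightarrow> real^'n \<Rightarrow> real" where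
  "gauss_logpdf S m u = - (real CARD('n) / 2) * ln (2 * pi) - ln (det S) / 2
      - ((u - m) \<bullet> (matrix_inv S *v (u - m))) / 2"

definition act :: "real^'n^'n \<Rightarrow> (nat \<Rightarrow> 'a \<Rightarrow> real^'n) \<Rightarrow> real^'n \<Rightarrow> nat \<Rightarrow> real \<Rightarrow> 'a \<Rightarrow> real^'n" where
  "act S xi K t x \<omega> = - (x *\<^sub>R K) + msqrt S *v xi t \<omega>"

fun traj :: "real \<Rightarrow> real^'n \<Rightarrow> real \<Rightarrow> real^'n^'n \<Rightarrow> ('a \<Rightarrow> real) \<Rightarrow> (nat \<Rightarrow> 'a \<Rightarrow> real)
    \<Rightarrow> (nat \<Rightarrow> 'a \<Rightarrow> real^'n) \<Rightarrow> (nat \<Rightarrow> 'a \<Rightarrow> real^'n) \<Rightarrow> real^'n \<Rightarrow> real^'n^'n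
    \<Rightarrow> nat \<Rightarrow> 'a \<Rightarrow> real" where
  "traj A B C D x0 wx wu xi K S 0 \<omega> = x0 \<omega>"
| "traj A B C D x0 wx wu xi K S (Suc t) \<omega> =
     (let x = traj A B C D x0 wx wu xi K S t \<omega> in
      (A + wx t \<omega> * C) * x + (B + wu t \<omega> v* D) \<bullet> act S xi K t x \<omega>)"

definition cost_f :: "'a measure \<Rightarrow> real \<Rightarrow> real^'n \<Rightarrow> real \<Rightarrow> real^'n^'n \<Rightarrow> real \<Rightarrow> real^'n^'n
    \<Rightarrow> real \<Rightarrow> real \<Rightarrow> ('a \<Rightarrow> real) \<Rightarrow> (nat \<Rightarrow> 'a \<Rightarrow> real)
    \<Rightarrow> (nat \<Rightarrow> 'a \<Rightarrow> real^'n) \<Rightarrow> (nat \<Rightarrow> 'a \<Rightarrow> real^'n) \<Rightarrow> real^'n \<Rightarrow> real^'n^'n \<Rightarrow> real" where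
  "cost_f M A B C D Q R \<gamma> \<tau> x0 wx wu xi K S =
     (\<Sum>t. \<gamma> ^ t * (\<integral>\<omega>. (let x = traj A B C D x0 wx wu xi K S t \<omega>;
                              u = act S xi K t x \<omega> in
                          Q * x\<^sup>2 + u \<bullet> (R *v u) + \<tau> * gauss_logpdf S (- (x *\<^sub>R K)) u) \<partial>M))"

definition S_KS :: "'a measure \<Rightarrow> real \<Rightarrow> real^'n \<Rightarrow> real \<Rightarrow> real^'n^'n \<Rightarrow> real
    \<Rightarrow> ('a \<Rightarrow> real) \<Rightarrow> (nat \<Rightarrow> 'a \<Rightarrow> real)
    \<Rightarrow> (nat \<Rightarrow> 'a \<Rightarrow> real^'n) \<Rightarrow> (nat \<Rightarrow> 'a \<Rightarrow> real^'n) \<Rightarrow> real^'n \<Rightarrow> real^'n^'n \<Rightarrow> real" where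
  "S_KS M A B C D \<gamma> x0 wx wu xi K S =
     (\<Sum>t. \<gamma> ^ t * (\<integral>\<omega>. (traj A B C D x0 wx wu xi K S t \<omega>)\<^sup>2 \<partial>M))"

definition EK :: "real \<Rightarrow> real \<Rightarrow> real^'n \<Rightarrow> real \<Rightarrow> real^'n^'n \<Rightarrow> real
    \<Rightarrow> real^'n^'n \<Rightarrow> real^'n \<Rightarrow> real^'n" where
  "EK \<gamma> A B C D Q R K = 2 *\<^sub>R (R *v K)
     + (2 * \<gamma> * PK \<gamma> A B C D Q R K) *\<^sub>R (Mmat B D *v K - A *\<^sub>R B)"

text \<open>Random sources: all embedded in real \<times> real^'n for a single independence statement.\<close>
datatype src = Init | Wx nat | Wu nat | Xi nat

definition srcvar :: "('a \<Rightarrow> real) \<Rightarrow> (nat \<Rightarrow> 'a \<Rightarrow> real) \<Rightarrow> (nat \<Rightarrow> 'a \<Rightarrow> real^'n)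
    \<Rightarrow> (nat \<Rightarrow> 'a \<Rightarrow> real^'n) \<Rightarrow> src \<Rightarrow> 'a \<Rightarrow> real \<times> (real^'n)" where
  "srcvar x0 wx wu xi i \<omega> = (case i of Init \<Rightarrow> (x0 \<omega>, 0) | Wx t \<Rightarrow> (wx t \<omega>, 0)
      | Wu t \<Rightarrow> (0, wu t \<omega>) | Xi t \<Rightarrow> (0, xi t \<omega>))"

end

theory Submission
  imports Defs
begin

text \<open>With \<open>u(t) = - K x(t) + L \<xi>(t)\<close> and \<open>L L\<^sup>T = \<Sigma>\<close>, the state satisfies
  \<open>x(t+1) = a(t) x(t) + b(t)\<close>, where the closed-loop gain \<open>a(t)\<close> and the exploration term
  \<open>b(t)\<close> are functions of the noise at time \<open>t\<close> only: they are independent of \<open>x(t)\<close> and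
  uncorrelated with each other. Hence \<open>m(t) = E x(t)\<^sup>2\<close> obeys
  \<open>m(t+1) = V\<^sub>K m(t) + \<langle>M, \<Sigma>\<rangle>\<close> with \<open>M = B\<^sup>T B + D\<^sup>T D\<close>, and the expected stage cost is
  \<open>(Q + K\<^sup>T R K) m(t) + \<langle>R, \<Sigma>\<rangle> + \<tau> E log \<pi>\<close>, where \<open>E log \<pi>\<close> depends on \<open>\<Sigma>\<close> only.
  Summing the discounted series gives, on \<open>\<Omega>\<close>, the closed forms
  \<open>S\<^sub>K\<^sub>,\<^sub>\<Sigma> = (\<mu> + \<gamma> \<langle>M, \<Sigma>\<rangle> / (1 - \<gamma>)) / (1 - \<gamma> V\<^sub>K)\<close> and
  \<open>f = (Q + K\<^sup>T R K) S\<^sub>K\<^sub>,\<^sub>\<Sigma> + (\<langle>R, \<Sigma>\<rangle> + \<tau> E log \<pi>) / (1 - \<gamma>)\<close>.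
  As \<open>\<Omega>\<close> is open, the gradients are those of the closed forms: the quotient rule in \<open>K\<close>
  produces \<open>P\<^sub>K\<close>, and Jacobi's formula \<open>d log det \<Sigma> = \<langle>\<Sigma>\<^sup>-\<^sup>1, d\<Sigma>\<rangle>\<close> produces the
  entropy term.\<close>

section \<open>Positive definite matrices\<close>

text \<open>Positive definiteness of a matrix indexed by an arbitrary finite set, so that the
  Cholesky factorization can be proved by induction on the index set.\<close>
definition posdef_on :: "'i set \<Rightarrow> ('i \<Rightarrow> 'i \<Rightarrow> real) \<Rightarrow> bool" where
  "posdef_on I S \<longleftrightarrow> (\<forall>i\<in>I. \<forall>j\<in>I. S i j = S j i) \<and>
     (\<forall>v. (\<exists>i\<in>I. v i \<noteq> 0) \<longrightarrow> (\<Sum>i\<in>I. \<Sum>j\<in>I. v i * S i j * v j) > 0)"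

lemma posdef_onD:
  "posdef_on I S \<Longrightarrow> i \<in> I \<Longrightarrow> j \<in> I \<Longrightarrow> S i j = S j i"
  "posdef_on I S \<Longrightarrow> \<exists>i\<in>I. v i \<noteq> 0 \<Longrightarrow> (\<Sum>i\<in>I. \<Sum>j\<in>I. v i * S i j * v j) > 0"
  unfolding posdef_on_def by blast+

lemma posdef_on_diag_pos:
  assumes "finite I" "posdef_on I S" "a \<in> I"
  shows "S a a > 0"
proof -
  let ?e = "\<lambda>k. if k = a then 1 else 0 :: real"
  have "(\<Sum>i\<in>I. \<Sum>j\<in>I. ?e i * S i j * ?e j) > 0"
    using assms(3) by (intro posdef_onD(2)[OF assms(2)]) auto
  also have "(\<Sum>i\<in>I. \<Sum>j\<in>I. ?e i * S i j * ?e j)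
      = (\<Sum>i\<in>I. if i = a then (\<Sum>j\<in>I. if j = a then S i j else 0) else 0)"
    by (intro sum.cong refl) (auto intro!: sum.cong)
  also have "\<dots> = S a a"
    using assms(1,3) by (simp add: sum.delta)
  finally show ?thesis .
qed

lemma quadratic_form_insert:
  fixes S :: "'i \<Rightarrow> 'i \<Rightarrow> real"
  assumes "finite I" "a \<notin> I" "\<And>j. j \<in> I \<Longrightarrow> S j a = S a j"
  shows "(\<Sum>i\<in>insert a I. \<Sum>j\<in>insert a I. w i * S i j * w j)
    = w a * S a a * w a + 2 * w a * (\<Sum>j\<in>I. S a j * w j) + (\<Sum>i\<in>I. \<Sum>j\<in>I. w i * S i j * w j)"
proof -
  have col: "(\<Sum>i\<in>I. w i * S i a * w a) = w a * (\<Sum>j\<in>I. S a j * w j)"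
    using assms(3) by (simp add: sum_distrib_left mult_ac)
  have row: "(\<Sum>j\<in>I. w a * S a j * w j) = w a * (\<Sum>j\<in>I. S a j * w j)"
    by (simp add: sum_distrib_left mult_ac)
  show ?thesis
    by (simp only: sum.insert[OF assms(1,2)] sum.distrib col row)
qed

lemma posdef_on_schur_complement:
  fixes S :: "'i \<Rightarrow> 'i \<Rightarrow> real"
  assumes "finite I" "a \<notin> I" "posdef_on (insert a I) S"
  shows "posdef_on I (\<lambda>i j. S i j - S i a * S j a / S a a)"
  unfolding posdef_on_def
proof (intro conjI ballI allI impI)
  fix i j assume "i \<in> I" "j \<in> I"
  then show "S i j - S i a * S j a / S a a = S j i - S j a * S i a / S a a"
    using posdef_onD(1)[OF assms(3)] by (simp add: mult.commute)
next
  note sym = posdef_onD(1)[OF assms(3)]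
  define d where "d = S a a"
  have d: "d > 0" unfolding d_def using assms by (intro posdef_on_diag_pos[OF _ assms(3)]) auto
  fix v :: "'i \<Rightarrow> real" assume nz: "\<exists>i\<in>I. v i \<noteq> 0"
  define s where "s = (\<Sum>j\<in>I. S a j * v j)"
  \<comment> \<open>the extension of \<open>v\<close> minimising the quadratic form in the \<open>a\<close>-coordinate\<close>
  define w where "w = v(a := - s / d)"
  have wI: "\<And>i. i \<in> I \<Longrightarrow> w i = v i" using assms(2) by (auto simp: w_def)
  have ws: "(\<Sum>j\<in>I. S a j * w j) = s" using wI by (simp add: s_def)
  have wQ: "(\<Sum>i\<in>I. \<Sum>j\<in>I. w i * S i j * w j) = (\<Sum>i\<in>I. \<Sum>j\<in>I. v i * S i j * v j)"
    using wI by simp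
  have wa: "w a = - s / d" by (simp add: w_def)
  have ss: "s * s = (\<Sum>i\<in>I. \<Sum>j\<in>I. v i * S i a * S j a * v j)"
    using sym unfolding s_def sum_product by (intro sum.cong refl) (simp add: mult_ac)
  have "0 < (\<Sum>i\<in>insert a I. \<Sum>j\<in>insert a I. w i * S i j * w j)"
    using nz wI by (intro posdef_onD(2)[OF assms(3)]) auto
  also have "\<dots> = (- s / d) * d * (- s / d) + 2 * (- s / d) * s + (\<Sum>i\<in>I. \<Sum>j\<in>I. v i * S i j * v j)"
    using sym by (subst quadratic_form_insert[OF assms(1,2)]) (auto simp only: ws wQ wa d_def)
  also have "\<dots> = (\<Sum>i\<in>I. \<Sum>j\<in>I. v i * S i j * v j) - s * s / d"
    using d by (simp add: field_simps)
  also have "\<dots> = (\<Sum>i\<in>I. \<Sum>j\<in>I. v i * S i j * v j - v i * S i a * S j a * v j / d)"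
    by (simp only: ss sum_divide_distrib sum_subtractf)
  also have "\<dots> = (\<Sum>i\<in>I. \<Sum>j\<in>I. v i * (S i j - S i a * S j a / S a a) * v j)"
    by (intro sum.cong refl) (simp add: d_def algebra_simps)
  finally show "(\<Sum>i\<in>I. \<Sum>j\<in>I. v i * (S i j - S i a * S j a / S a a) * v j) > 0" .
qed

lemma posdef_on_factorization:
  fixes S :: "'i \<Rightarrow> 'i \<Rightarrow> real"
  assumes "finite I" "posdef_on I S"
  shows "\<exists>L. \<forall>i\<in>I. \<forall>j\<in>I. (\<Sum>k\<in>I. L i k * L j k) = S i j"
  using assms
proof (induction I arbitrary: S rule: finite_induct)
  case empty
  then show ?case by simp
next
  case (insert a I)
  define d where "d = S a a"
  have d: "d > 0" unfolding d_def using insert by (intro posdef_on_diag_pos) auto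
  note sym = posdef_onD(1)[OF insert.prems]
  obtain L' where L': "\<And>i j. i \<in> I \<Longrightarrow> j \<in> I \<Longrightarrow> (\<Sum>k\<in>I. L' i k * L' j k) = S i j - S i a * S j a / d"
    using insert.IH[OF posdef_on_schur_complement[OF insert.hyps insert.prems]] unfolding d_def by blast
  \<comment> \<open>first column \<open>S\<^sub>i\<^sub>a / \<surd>S\<^sub>a\<^sub>a\<close>, the remaining block factors the Schur complement\<close>
  define L where "L i k = (if k = a then S i a / sqrt d else if i = a then 0 else L' i k)" for i k
  show ?case
  proof (intro exI ballI)
    fix i j assume i: "i \<in> insert a I" and j: "j \<in> insert a I"
    have "(\<Sum>k\<in>insert a I. L i k * L j k) = S i a * S j a / d + (\<Sum>k\<in>I. L i k * L j k)"
      using insert.hyps d by (simp add: L_def real_sqrt_mult[symmetric])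
    also have "(\<Sum>k\<in>I. L i k * L j k) = (if i = a \<or> j = a then 0 else S i j - S i a * S j a / d)"
    proof -
      have "(\<Sum>k\<in>I. L i k * L j k) = (\<Sum>k\<in>I. if i = a \<or> j = a then 0 else L' i k * L' j k)"
        using insert.hyps(2) by (intro sum.cong refl) (auto simp: L_def)
      then show ?thesis using i j L' by auto
    qed
    also have "S i a * S j a / d + \<dots> = S i j"
      using i j d sym by (auto simp: d_def)
    finally show "(\<Sum>k\<in>insert a I. L i k * L j k) = S i j" .
  qed
qed

lemma inner_matrix_vector_mult_eq:
  "(x::real^'n) \<bullet> (S *v y) = (\<Sum>i\<in>UNIV. \<Sum>j\<in>UNIV. x$i * S$i$j * y$j)"
  by (simp add: inner_vec_def matrix_vector_mult_def sum_distrib_left mult.assoc)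

lemma pos_def_mat_posdef_on:
  fixes S :: "real^'n^'n"
  assumes "pos_def_mat S"
  shows "posdef_on UNIV (\<lambda>i j. S$i$j)"
  unfolding posdef_on_def
proof (intro conjI ballI allI impI)
  fix i j
  show "S$i$j = S$j$i"
    using assms unfolding pos_def_mat_def by (metis transpose_def vec_lambda_beta)
next
  fix v :: "'n \<Rightarrow> real" assume "\<exists>i\<in>UNIV. v i \<noteq> 0"
  then have "(\<chi> i. v i) \<noteq> 0" by (auto simp: vec_eq_iff)
  then have "(\<chi> i. v i) \<bullet> (S *v (\<chi> i. v i)) > 0"
    using assms unfolding pos_def_mat_def by blast
  then show "(\<Sum>i\<in>UNIV. \<Sum>j\<in>UNIV. v i * S$i$j * v j) > 0"
    by (simp add: inner_matrix_vector_mult_eq)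
qed

lemma pos_def_mat_factorization:
  fixes S :: "real^'n^'n"
  assumes "pos_def_mat S"
  shows "\<exists>L::real^'n^'n. L ** transpose L = S"
proof -
  have "\<exists>L. \<forall>i\<in>UNIV. \<forall>j\<in>UNIV. (\<Sum>k::'n\<in>UNIV. L i k * L j k) = S$i$j"
    by (rule posdef_on_factorization[OF _ pos_def_mat_posdef_on[OF assms]]) simp
  then obtain L where "\<forall>i\<in>UNIV. \<forall>j\<in>UNIV. (\<Sum>k::'n\<in>UNIV. L i k * L j k) = S$i$j" ..
  then have "(\<chi> i k. L i k) ** transpose (\<chi> i k. L i k) = S"
    by (simp add: vec_eq_iff matrix_matrix_mult_def transpose_def)
  then show ?thesis by blast
qed

lemma msqrt_factorization: "pos_def_mat S \<Longrightarrow> msqrt S ** transpose (msqrt S) = S"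
  unfolding msqrt_def by (rule someI_ex) (rule pos_def_mat_factorization)

lemma matrix_inv_left:
  fixes S :: "'a::field^'n^'n"
  assumes "invertible S"
  shows "matrix_inv S ** S = mat 1"
  using someI_ex[OF assms[unfolded invertible_def]] unfolding matrix_inv_def by auto

lemma transpose_matrix_inv_symmetric:
  fixes S :: "real^'n^'n"
  assumes "transpose S = S" "invertible S"
  shows "transpose (matrix_inv S) = matrix_inv S"
proof -
  have "S ** transpose (matrix_inv S) = mat 1"
    using arg_cong[OF matrix_inv_left[OF assms(2)], of transpose] assms(1)
    by (simp add: matrix_transpose_mul)
  then have "matrix_inv S ** (S ** transpose (matrix_inv S)) = matrix_inv S" by simp
  then show ?thesis by (simp add: matrix_mul_assoc matrix_inv_left[OF assms(2)])
qed

lemma pos_def_mat_invertible: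
  fixes S :: "real^'n^'n"
  assumes "pos_def_mat S"
  shows "invertible S"
proof -
  have "S *v x = 0 \<Longrightarrow> x = 0" for x
    using assms unfolding pos_def_mat_def by force
  then show ?thesis
    using matrix_left_invertible_ker invertible_left_inverse by blast
qed

lemma pos_def_mat_det_pos: "pos_def_mat (S::real^'n^'n) \<Longrightarrow> det S > 0"
proof -
  assume S: "pos_def_mat S"
  have "det S = det (msqrt S) * det (msqrt S)"
    using arg_cong[OF msqrt_factorization[OF S], of det] by (simp add: det_mul det_transpose)
  moreover have "det S \<noteq> 0"
    using pos_def_mat_invertible[OF S] invertible_det_nz by blast
  ultimately show ?thesis by (metis mult_eq_0_iff not_real_square_gt_zero)
qed

text \<open>The inner product of \<^typ>\<open>real^'n^'m\<close> is the Frobenius inner product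
  \<open>\<langle>G, H\<rangle> = tr (G\<^sup>T H)\<close>, written with traces in the paper.\<close>
lemma inner_matrix_eq: "(G::real^'n^'m) \<bullet> H = (\<Sum>i\<in>UNIV. \<Sum>j\<in>UNIV. G $ i $ j * H $ i $ j)"
  by (simp add: inner_vec_def)

lemma inner_transpose_matrix_inv:
  fixes S :: "real^'n^'n"
  assumes "invertible S"
  shows "transpose (matrix_inv S) \<bullet> S = real CARD('n)"
proof -
  have "transpose (matrix_inv S) \<bullet> S = (\<Sum>j\<in>UNIV. (matrix_inv S ** S) $ j $ j)"
    unfolding inner_matrix_eq
    by (subst sum.swap) (simp add: matrix_matrix_mult_def transpose_def mult.commute)
  also have "\<dots> = real CARD('n)"
    by (simp add: matrix_inv_left[OF assms] mat_def)
  finally show ?thesis .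
qed

lemma pos_def_mat_coercive:
  fixes S :: "real^'n^'n"
  assumes "pos_def_mat S"
  obtains c where "c > 0" "\<And>v. c * (norm v)\<^sup>2 \<le> v \<bullet> (S *v v)"
proof -
  have cont: "continuous_on (sphere 0 1) (\<lambda>v::real^'n. v \<bullet> (S *v v))"
    by (intro continuous_on_inner continuous_on_id linear_continuous_on matrix_vector_mul_bounded_linear)
  have "sphere (0::real^'n) 1 \<noteq> {}"
    by (simp add: sphere_def) (metis norm_axis_1)
  then obtain u where u: "u \<in> sphere 0 1" and min: "\<And>w. w \<in> sphere 0 1 \<Longrightarrow> u \<bullet> (S *v u) \<le> w \<bullet> (S *v w)"
    using continuous_attains_inf[OF compact_sphere _ cont] by blast
  have "u \<noteq> 0" using u by auto
  then have "u \<bullet> (S *v u) > 0"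
    using assms unfolding pos_def_mat_def by blast
  moreover have "u \<bullet> (S *v u) * (norm v)\<^sup>2 \<le> v \<bullet> (S *v v)" for v
  proof (cases "v = 0")
    case False
    have "(v /\<^sub>R norm v) \<bullet> (S *v (v /\<^sub>R norm v)) = v \<bullet> (S *v v) / (norm v)\<^sup>2"
      by (simp add: matrix_vector_mult_scaleR power2_eq_square divide_inverse inverse_mult_distrib mult_ac)
    moreover have "u \<bullet> (S *v u) \<le> (v /\<^sub>R norm v) \<bullet> (S *v (v /\<^sub>R norm v))"
      using False by (intro min) simp
    ultimately show ?thesis
      using False by (simp add: pos_le_divide_eq)
  qed simp
  ultimately show ?thesis using that by blast
qed

lemma abs_quadratic_form_le:
  fixes H :: "real^'n^'n"
  shows "\<bar>v \<bullet> (H *v v)\<bar> \<le> real CARD('n) * real CARD('n) * norm H * (norm v)\<^sup>2"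
proof -
  have "onorm ((*v) H) \<le> real CARD('n) * real CARD('n) * norm H"
    by (rule onorm_le_matrix_component)
      (meson component_le_norm_cart Finite_Cartesian_Product.norm_nth_le order_trans)
  then have "norm (H *v v) \<le> real CARD('n) * real CARD('n) * norm H * norm v"
    using onorm[OF matrix_vector_mul_bounded_linear, of H v]
    by (meson mult_right_mono norm_ge_zero order_trans)
  then have "norm v * norm (H *v v) \<le> norm v * (real CARD('n) * real CARD('n) * norm H * norm v)"
    by (rule mult_left_mono) simp
  then show ?thesis
    using Cauchy_Schwarz_ineq2[of v "H *v v"] by (simp add: power2_eq_square mult_ac)
qed

lemma eventually_pos_def_mat:
  fixes S :: "real^'n^'n"
  assumes "pos_def_mat S"
  shows "\<forall>\<^sub>F S' in at S within {S'. transpose S' = S'}. pos_def_mat S'"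
proof -
  obtain c where c: "c > 0" "\<And>v. c * (norm v)\<^sup>2 \<le> v \<bullet> (S *v v)"
    using pos_def_mat_coercive[OF assms] by blast
  define N where "N = real CARD('n) * real CARD('n)"
  have N: "N > 0" by (simp add: N_def)
  have "pos_def_mat S'" if "transpose S' = S'" "dist S' S < c / N" for S'
    unfolding pos_def_mat_def
  proof (intro conjI allI impI that(1))
    fix v :: "real^'n" assume "v \<noteq> 0"
    have "\<bar>v \<bullet> ((S' - S) *v v)\<bar> \<le> N * norm (S' - S) * (norm v)\<^sup>2"
      unfolding N_def by (rule abs_quadratic_form_le)
    also have "\<dots> < c * (norm v)\<^sup>2"
      using that(2) N \<open>v \<noteq> 0\<close> by (simp add: dist_norm field_simps)
    finally show "v \<bullet> (S' *v v) > 0"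
      using c(2)[of v] by (simp add: matrix_vector_mult_diff_rdistrib inner_diff_right)
  qed
  then show ?thesis
    unfolding eventually_at using c N by (intro exI[of _ "c / N"]) auto
qed

lemma det_replace_row:
  fixes S :: "real^'n^'n"
  shows "det (\<chi> j. if j = i then h else S$j) =
     (\<Sum>p\<in>{p. p permutes UNIV}. of_int (sign p) * (h $ p i * (\<Prod>j\<in>UNIV - {i}. S$j$p j)))"
proof -
  have "(\<Prod>j\<in>UNIV. (\<chi> j. if j = i then h else S$j)$j$p j) = h $ p i * (\<Prod>j\<in>UNIV - {i}. S$j$p j)" for p
    by (subst prod.remove[of _ i]) (auto intro!: prod.cong)
  then show ?thesis unfolding det_def by simp
qed

text \<open>The cofactor of entry \<open>(i, k)\<close>, by Cramer's rule for the rows of \<open>S\<close>.\<close>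
lemma det_replace_row_axis:
  fixes S :: "real^'n^'n"
  assumes "invertible S"
  shows "det (\<chi> j. if j = i then axis k 1 else S$j) = matrix_inv S $ k $ i * det S"
proof -
  have rows: "row l A = A $ l" for l and A :: "real^'n^'n"
    by (simp add: row_def vec_eq_iff)
  have "(\<Sum>l\<in>UNIV. row k (matrix_inv S) $ l *s row l S) = axis k 1"
    using matrix_inv_left[OF assms]
    by (simp add: rows vec_eq_iff axis_def matrix_matrix_mult_def mat_def sum_component)
  then have "det (\<chi> j. if j = i then axis k 1 else row j S) = row k (matrix_inv S) $ i * det S"
    using cramer_lemma_transpose[of i "row k (matrix_inv S)" S] by (simp only:)
  then show ?thesis
    unfolding rows .
qed

lemma has_derivative_det:
  fixes S :: "real^'n^'n"
  assumes "invertible S"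
  shows "(det has_derivative (\<lambda>H. det S * (transpose (matrix_inv S) \<bullet> H))) (at S within X)"
proof -
  have entry: "((\<lambda>A::real^'n^'n. A$i$k) has_derivative (\<lambda>H. H$i$k)) (at A within X)" for i k A
    by (intro bounded_linear_imp_has_derivative bounded_linear_compose[OF bounded_linear_vec_nth]
        bounded_linear_vec_nth)
  have "(det has_derivative (\<lambda>H. \<Sum>p\<in>{p. p permutes UNIV}. of_int (sign p) *
        (\<Sum>i\<in>UNIV. H$i$p i * (\<Prod>j\<in>UNIV - {i}. S$j$p j)))) (at S within X)"
    unfolding det_def[abs_def]
    by (intro has_derivative_sum has_derivative_mult_right has_derivative_prod entry)
  moreover have "(\<Sum>p\<in>{p. p permutes UNIV}. of_int (sign p) * (\<Sum>i\<in>UNIV. H$i$p i * (\<Prod>j\<in>UNIV - {i}. S$j$p j)))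
      = det S * (transpose (matrix_inv S) \<bullet> H)" for H
  proof -
    have "H$i$p i = (\<Sum>k\<in>UNIV. H$i$k * axis k 1 $ p i)" for i and p :: "'n \<Rightarrow> 'n"
    proof -
      have "(\<Sum>k\<in>UNIV. H$i$k * axis k 1 $ p i) = (\<Sum>k\<in>UNIV. if k = p i then H$i$k else 0)"
        by (rule sum.cong) (auto simp: axis_def)
      then show ?thesis by simp
    qed
    then have "(\<Sum>p\<in>{p. p permutes UNIV}. of_int (sign p) * (\<Sum>i\<in>UNIV. H$i$p i * (\<Prod>j\<in>UNIV - {i}. S$j$p j)))
      = (\<Sum>i\<in>UNIV. \<Sum>k\<in>UNIV. H$i$k * det (\<chi> j. if j = i then axis k 1 else S$j))"
      unfolding det_replace_row
      by (simp add: sum_distrib_left sum_distrib_right mult_ac sum.swap[of _ "{p. p permutes UNIV}"])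
    also have "\<dots> = det S * (transpose (matrix_inv S) \<bullet> H)"
      by (simp add: det_replace_row_axis[OF assms] inner_matrix_eq transpose_def sum_distrib_left mult_ac)
    finally show ?thesis .
  qed
  ultimately show ?thesis by simp
qed

section \<open>Square-integrable variables and independent sources\<close>

definition sq_integrable :: "'a measure \<Rightarrow> ('a \<Rightarrow> real) \<Rightarrow> bool" where
  "sq_integrable M f \<longleftrightarrow> f \<in> borel_measurable M \<and> integrable M (\<lambda>\<omega>. (f \<omega>)\<^sup>2)"

definition centered_orthonormal :: "'a measure \<Rightarrow> 'j set \<Rightarrow> ('j \<Rightarrow> 'a \<Rightarrow> real) \<Rightarrow> bool" where
  "centered_orthonormal M J r \<longleftrightarrow>
     (\<forall>j\<in>J. sq_integrable M (r j) \<and> (\<integral>\<omega>. r j \<omega> \<partial>M) = 0) \<and>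
     (\<forall>j\<in>J. \<forall>k\<in>J. (\<integral>\<omega>. r j \<omega> * r k \<omega> \<partial>M) = (if j = k then 1 else 0))"

lemma sq_integrable_mult_integrable:
  assumes "sq_integrable M f" "sq_integrable M g"
  shows "integrable M (\<lambda>\<omega>. f \<omega> * g \<omega>)"
proof (rule Bochner_Integration.integrable_bound[of _ "\<lambda>\<omega>. (f \<omega>)\<^sup>2 + (g \<omega>)\<^sup>2"])
  show "integrable M (\<lambda>\<omega>. (f \<omega>)\<^sup>2 + (g \<omega>)\<^sup>2)"
    using assms unfolding sq_integrable_def by auto
  show "(\<lambda>\<omega>. f \<omega> * g \<omega>) \<in> borel_measurable M"
    using assms unfolding sq_integrable_def by auto
  have "\<bar>x * y\<bar> \<le> x\<^sup>2 + y\<^sup>2" for x y :: real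
  proof -
    have "2 * (\<bar>x\<bar> * \<bar>y\<bar>) \<le> x\<^sup>2 + y\<^sup>2" "0 \<le> \<bar>x\<bar> * \<bar>y\<bar>"
      using sum_squares_bound[of "\<bar>x\<bar>" "\<bar>y\<bar>"] by (simp_all add: mult.assoc)
    then show ?thesis unfolding abs_mult by linarith
  qed
  then show "AE \<omega> in M. norm (f \<omega> * g \<omega>) \<le> norm ((f \<omega>)\<^sup>2 + (g \<omega>)\<^sup>2)"
    by simp
qed

context finite_measure
begin

lemma sq_integrable_const: "sq_integrable M (\<lambda>\<omega>. c)"
  unfolding sq_integrable_def by simp

lemma sq_integrable_integrable: "sq_integrable M f \<Longrightarrow> integrable M f"
  using sq_integrable_mult_integrable[where f=f and g="\<lambda>_. 1"] sq_integrable_const by simp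

lemma sq_integrable_add: "sq_integrable M f \<Longrightarrow> sq_integrable M g \<Longrightarrow> sq_integrable M (\<lambda>\<omega>. f \<omega> + g \<omega>)"
  using sq_integrable_mult_integrable[of M f g] unfolding sq_integrable_def power2_sum mult.assoc
  by (auto intro!: Bochner_Integration.integrable_add Bochner_Integration.integrable_mult_right)

lemma sq_integrable_cmult: "sq_integrable M f \<Longrightarrow> sq_integrable M (\<lambda>\<omega>. c * f \<omega>)"
  by (auto simp: sq_integrable_def power_mult_distrib)

lemma sq_integrable_sum:
  "finite K \<Longrightarrow> (\<And>k. k \<in> K \<Longrightarrow> sq_integrable M (f k)) \<Longrightarrow> sq_integrable M (\<lambda>\<omega>. \<Sum>k\<in>K. f k \<omega>)"
  by (induction K rule: finite_induct) (auto simp: sq_integrable_const sq_integrable_add)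

end

context prob_space
begin

lemma integral_affine_orthonormal_mult:
  assumes "finite J" "centered_orthonormal M J r"
  shows "integrable M (\<lambda>\<omega>. (\<alpha> + (\<Sum>j\<in>J. \<beta> j * r j \<omega>)) * (\<alpha>' + (\<Sum>j\<in>J. \<beta>' j * r j \<omega>)))"
    and "(\<integral>\<omega>. (\<alpha> + (\<Sum>j\<in>J. \<beta> j * r j \<omega>)) * (\<alpha>' + (\<Sum>j\<in>J. \<beta>' j * r j \<omega>)) \<partial>M)
      = \<alpha> * \<alpha>' + (\<Sum>j\<in>J. \<beta> j * \<beta>' j)"
proof -
  have r: "\<And>j. j \<in> J \<Longrightarrow> integrable M (r j)" "\<And>j. j \<in> J \<Longrightarrow> (\<integral>\<omega>. r j \<omega> \<partial>M) = 0"
    and rr: "\<And>j k. j \<in> J \<Longrightarrow> k \<in> J \<Longrightarrow> integrable M (\<lambda>\<omega>. r j \<omega> * r k \<omega>)"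
    and cov: "\<And>j k. j \<in> J \<Longrightarrow> k \<in> J \<Longrightarrow> (\<integral>\<omega>. r j \<omega> * r k \<omega> \<partial>M) = (if j = k then 1 else 0)"
    using assms(2) unfolding centered_orthonormal_def
    by (auto intro: sq_integrable_integrable sq_integrable_mult_integrable)
  have expand: "(\<alpha> + (\<Sum>j\<in>J. \<beta> j * r j \<omega>)) * (\<alpha>' + (\<Sum>j\<in>J. \<beta>' j * r j \<omega>)) =
    \<alpha> * \<alpha>' + ((\<Sum>j\<in>J. (\<alpha> * \<beta>' j + \<alpha>' * \<beta> j) * r j \<omega>) +
       (\<Sum>j\<in>J. \<Sum>k\<in>J. (\<beta> j * \<beta>' k) * (r j \<omega> * r k \<omega>)))" for \<omega>
  proof -
    have "(\<Sum>j\<in>J. \<beta> j * r j \<omega>) * (\<Sum>k\<in>J. \<beta>' k * r k \<omega>)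
        = (\<Sum>j\<in>J. \<Sum>k\<in>J. (\<beta> j * \<beta>' k) * (r j \<omega> * r k \<omega>))"
      by (simp add: sum_product mult_ac)
    moreover have "\<alpha> * (\<Sum>j\<in>J. \<beta>' j * r j \<omega>) + (\<Sum>j\<in>J. \<beta> j * r j \<omega>) * \<alpha>'
        = (\<Sum>j\<in>J. (\<alpha> * \<beta>' j + \<alpha>' * \<beta> j) * r j \<omega>)"
      by (simp add: sum_distrib_left sum_distrib_right sum.distrib algebra_simps)
    ultimately show ?thesis by (simp add: algebra_simps)
  qed
  have i1: "integrable M (\<lambda>\<omega>. \<Sum>j\<in>J. (\<alpha> * \<beta>' j + \<alpha>' * \<beta> j) * r j \<omega>)"
    using r by (intro Bochner_Integration.integrable_sum Bochner_Integration.integrable_mult_right) auto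
  have i2: "integrable M (\<lambda>\<omega>. \<Sum>j\<in>J. \<Sum>k\<in>J. (\<beta> j * \<beta>' k) * (r j \<omega> * r k \<omega>))"
    using rr by (intro Bochner_Integration.integrable_sum Bochner_Integration.integrable_mult_right) auto
  show "integrable M (\<lambda>\<omega>. (\<alpha> + (\<Sum>j\<in>J. \<beta> j * r j \<omega>)) * (\<alpha>' + (\<Sum>j\<in>J. \<beta>' j * r j \<omega>)))"
    unfolding expand using i1 i2 by simp
  have e1: "(\<integral>\<omega>. (\<Sum>j\<in>J. (\<alpha> * \<beta>' j + \<alpha>' * \<beta> j) * r j \<omega>) \<partial>M) = 0"
    using r by (subst Bochner_Integration.integral_sum) auto
  have "(\<integral>\<omega>. (\<Sum>j\<in>J. \<Sum>k\<in>J. (\<beta> j * \<beta>' k) * (r j \<omega> * r k \<omega>)) \<partial>M)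
      = (\<Sum>j\<in>J. \<Sum>k\<in>J. (\<beta> j * \<beta>' k) * (if j = k then 1 else 0))"
    using rr cov by (simp add: Bochner_Integration.integral_sum Bochner_Integration.integrable_sum)
  also have "\<dots> = (\<Sum>j\<in>J. \<beta> j * \<beta>' j)"
    using assms(1) by (simp add: if_distrib cong: if_cong)
  finally have e2: "(\<integral>\<omega>. (\<Sum>j\<in>J. \<Sum>k\<in>J. (\<beta> j * \<beta>' k) * (r j \<omega> * r k \<omega>)) \<partial>M)
      = (\<Sum>j\<in>J. \<beta> j * \<beta>' j)" .
  show "(\<integral>\<omega>. (\<alpha> + (\<Sum>j\<in>J. \<beta> j * r j \<omega>)) * (\<alpha>' + (\<Sum>j\<in>J. \<beta>' j * r j \<omega>)) \<partial>M)
      = \<alpha> * \<alpha>' + (\<Sum>j\<in>J. \<beta> j * \<beta>' j)"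
    unfolding expand using i1 i2 e1 e2 by (simp add: prob_space)
qed

lemma integral_linear_orthonormal:
  fixes \<xi> :: "'a \<Rightarrow> real^'n" and L :: "real^'n^'m"
  assumes "centered_orthonormal M UNIV (\<lambda>k \<omega>. \<xi> \<omega> $ k)"
  shows "integrable M (\<lambda>\<omega>. (L *v \<xi> \<omega>) \<bullet> v)" "(\<integral>\<omega>. (L *v \<xi> \<omega>) \<bullet> v \<partial>M) = 0"
proof -
  have eq: "(L *v \<xi> \<omega>) \<bullet> v = (\<Sum>a\<in>UNIV. (\<Sum>k\<in>UNIV. L$k$a * v$k) * \<xi> \<omega> $ a)" for \<omega>
  proof -
    have "(L *v \<xi> \<omega>) \<bullet> v = (\<Sum>k\<in>UNIV. \<Sum>a\<in>UNIV. L$k$a * v$k * \<xi> \<omega> $ a)"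
      by (simp add: inner_vec_def matrix_vector_mult_def sum_distrib_left sum_distrib_right mult_ac)
    also have "\<dots> = (\<Sum>a\<in>UNIV. \<Sum>k\<in>UNIV. L$k$a * v$k * \<xi> \<omega> $ a)"
      by (rule sum.swap)
    finally show ?thesis by (simp add: sum_distrib_right)
  qed
  have "integrable M (\<lambda>\<omega>. \<xi> \<omega> $ a)" "(\<integral>\<omega>. \<xi> \<omega> $ a \<partial>M) = 0" for a
    using assms unfolding centered_orthonormal_def by (auto intro: sq_integrable_integrable)
  then show "integrable M (\<lambda>\<omega>. (L *v \<xi> \<omega>) \<bullet> v)" "(\<integral>\<omega>. (L *v \<xi> \<omega>) \<bullet> v \<partial>M) = 0"
    unfolding eq by simp_all
qed

lemma integral_quadratic_form_orthonormal:
  fixes \<xi> :: "'a \<Rightarrow> real^'n" and L :: "real^'n^'m" and G :: "real^'m^'m"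
  assumes "centered_orthonormal M UNIV (\<lambda>k \<omega>. \<xi> \<omega> $ k)"
  shows "integrable M (\<lambda>\<omega>. (L *v \<xi> \<omega>) \<bullet> (G *v (L *v \<xi> \<omega>)))"
    "(\<integral>\<omega>. (L *v \<xi> \<omega>) \<bullet> (G *v (L *v \<xi> \<omega>)) \<partial>M) = G \<bullet> (L ** transpose L)"
proof -
  have eq: "(L *v \<xi> \<omega>) \<bullet> (G *v (L *v \<xi> \<omega>)) = (\<Sum>k\<in>UNIV.
      (0 + (\<Sum>a\<in>UNIV. L$k$a * \<xi> \<omega> $ a)) * (0 + (\<Sum>a\<in>UNIV. (G ** L)$k$a * \<xi> \<omega> $ a)))" for \<omega>
    by (simp add: inner_vec_def matrix_vector_mul_assoc) (simp add: matrix_vector_mult_def)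
  note on = integral_affine_orthonormal_mult[OF finite_class.finite_UNIV assms, of 0 "\<lambda>a. L$_$a" 0]
  show "integrable M (\<lambda>\<omega>. (L *v \<xi> \<omega>) \<bullet> (G *v (L *v \<xi> \<omega>)))"
    unfolding eq using on(1) by simp
  have "(\<integral>\<omega>. (L *v \<xi> \<omega>) \<bullet> (G *v (L *v \<xi> \<omega>)) \<partial>M) = (\<Sum>k\<in>UNIV. \<Sum>a\<in>UNIV. L$k$a * (G ** L)$k$a)"
    unfolding eq using on by (simp add: Bochner_Integration.integral_sum)
  also have "\<dots> = (\<Sum>k\<in>UNIV. \<Sum>a\<in>UNIV. \<Sum>b\<in>UNIV. G$k$b * (L$k$a * L$b$a))"
    by (simp add: matrix_matrix_mult_def sum_distrib_left mult_ac)
  also have "\<dots> = (\<Sum>k\<in>UNIV. \<Sum>b\<in>UNIV. \<Sum>a\<in>UNIV. G$k$b * (L$k$a * L$b$a))"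
    by (rule sum.cong[OF refl], rule sum.swap)
  also have "\<dots> = G \<bullet> (L ** transpose L)"
    by (simp add: inner_matrix_eq matrix_matrix_mult_def transpose_def sum_distrib_left)
  finally show "(\<integral>\<omega>. (L *v \<xi> \<omega>) \<bullet> (G *v (L *v \<xi> \<omega>)) \<partial>M) = G \<bullet> (L ** transpose L)" .
qed

end

locale indep_sources = prob_space M for M :: "'a measure" +
  fixes Z :: "'i \<Rightarrow> 'a \<Rightarrow> 'b::topological_space"
  assumes indep_sources: "indep_vars (\<lambda>_. borel) Z UNIV"
begin

text \<open>\<open>f\<close> is a Borel function of the sources \<open>Z i\<close>, \<open>i \<in> I\<close>; functions determined by
  disjoint sets of sources are independent.\<close>
definition determined_by :: "'i set \<Rightarrow> ('a \<Rightarrow> real) \<Rightarrow> bool" where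
  "determined_by I f \<longleftrightarrow>
     (\<exists>G \<in> borel_measurable (PiM I (\<lambda>_. borel)). f = (\<lambda>\<omega>. G (restrict (\<lambda>i. Z i \<omega>) I)))"

lemma determined_byE:
  assumes "determined_by I f"
  obtains G where "G \<in> borel_measurable (PiM I (\<lambda>_. borel))" "f = (\<lambda>\<omega>. G (restrict (\<lambda>i. Z i \<omega>) I))"
  using assms unfolding determined_by_def by blast

lemma determined_by_measurable:
  assumes "determined_by I f"
  shows "f \<in> borel_measurable M"
proof -
  have "(\<lambda>\<omega>. restrict (\<lambda>i. Z i \<omega>) I) \<in> measurable M (PiM I (\<lambda>_. borel))"
    using indep_sources unfolding indep_vars_def by (intro measurable_restrict) auto
  with assms show ?thesis
    by (auto elim!: determined_byE intro: measurable_compose)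
qed

lemma indep_var_determined_by:
  assumes "I \<inter> J = {}" "determined_by I f" "determined_by J g"
  shows "indep_var borel f borel g"
proof -
  obtain F G where F: "F \<in> borel_measurable (PiM I (\<lambda>_. borel))" "f = (\<lambda>\<omega>. F (restrict (\<lambda>i. Z i \<omega>) I))"
    and G: "G \<in> borel_measurable (PiM J (\<lambda>_. borel))" "g = (\<lambda>\<omega>. G (restrict (\<lambda>i. Z i \<omega>) J))"
    using assms(2,3) by (auto elim!: determined_byE)
  have "indep_var (PiM I (\<lambda>_. borel)) (\<lambda>\<omega>. restrict (\<lambda>i. Z i \<omega>) I)
      (PiM J (\<lambda>_. borel)) (\<lambda>\<omega>. restrict (\<lambda>i. Z i \<omega>) J)"
    using indep_var_restrict[OF indep_sources assms(1)] by simp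
  from indep_var_compose[OF this F(1) G(1)] show ?thesis
    by (simp add: F(2) G(2) comp_def)
qed

lemma determined_by_const: "determined_by I (\<lambda>\<omega>. c)"
  unfolding determined_by_def by (intro bexI[of _ "\<lambda>_. c"]) auto

lemma determined_by_source:
  assumes "i \<in> I" "\<phi> \<in> borel_measurable borel"
  shows "determined_by I (\<lambda>\<omega>. \<phi> (Z i \<omega>))"
  unfolding determined_by_def using assms
  by (intro bexI[of _ "\<lambda>y. \<phi> (y i)"]) (auto intro: measurable_compose[OF measurable_component_singleton])

lemma determined_by_compose2:
  assumes "determined_by I f" "determined_by I g" "(\<lambda>(x, y). \<phi> x y) \<in> borel_measurable (borel \<Otimes>\<^sub>M borel)"
  shows "determined_by I (\<lambda>\<omega>. \<phi> (f \<omega>) (g \<omega>))"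
proof -
  obtain F G where F: "F \<in> borel_measurable (PiM I (\<lambda>_. borel))" "f = (\<lambda>\<omega>. F (restrict (\<lambda>i. Z i \<omega>) I))"
    and G: "G \<in> borel_measurable (PiM I (\<lambda>_. borel))" "g = (\<lambda>\<omega>. G (restrict (\<lambda>i. Z i \<omega>) I))"
    using assms(1,2) by (auto elim!: determined_byE)
  have "(\<lambda>y. (F y, G y)) \<in> measurable (PiM I (\<lambda>_. borel)) (borel \<Otimes>\<^sub>M borel)"
    using F(1) G(1) by (rule measurable_Pair)
  from measurable_compose[OF this assms(3)]
  have "(\<lambda>y. \<phi> (F y) (G y)) \<in> borel_measurable (PiM I (\<lambda>_. borel))" by simp
  then show ?thesis unfolding determined_by_def
    by (intro bexI[of _ "\<lambda>y. \<phi> (F y) (G y)"]) (auto simp: F(2) G(2))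
qed

lemma determined_by_add: "determined_by I f \<Longrightarrow> determined_by I g \<Longrightarrow> determined_by I (\<lambda>\<omega>. f \<omega> + g \<omega>)"
  and determined_by_diff: "determined_by I f \<Longrightarrow> determined_by I g \<Longrightarrow> determined_by I (\<lambda>\<omega>. f \<omega> - g \<omega>)"
  and determined_by_mult: "determined_by I f \<Longrightarrow> determined_by I g \<Longrightarrow> determined_by I (\<lambda>\<omega>. f \<omega> * g \<omega>)"
  by (rule determined_by_compose2; simp)+

lemma determined_by_sum:
  "finite K \<Longrightarrow> (\<And>k. k \<in> K \<Longrightarrow> determined_by I (f k)) \<Longrightarrow> determined_by I (\<lambda>\<omega>. \<Sum>k\<in>K. f k \<omega>)"
  by (induction K rule: finite_induct) (auto simp: determined_by_const determined_by_add)

lemma determined_by_mono: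
  assumes "I \<subseteq> J" "determined_by I f"
  shows "determined_by J f"
proof -
  obtain F where F: "F \<in> borel_measurable (PiM I (\<lambda>_. borel))" "f = (\<lambda>\<omega>. F (restrict (\<lambda>i. Z i \<omega>) I))"
    using assms(2) by (auto elim!: determined_byE)
  have "(\<lambda>y. F (restrict y I)) \<in> borel_measurable (PiM J (\<lambda>_. borel))"
    using measurable_restrict_subset[OF assms(1)] F(1) by (rule measurable_compose)
  moreover have "f = (\<lambda>\<omega>. F (restrict (restrict (\<lambda>i. Z i \<omega>) J) I))"
    using assms(1) by (simp add: F(2) restrict_restrict inf.absorb_iff2)
  ultimately show ?thesis
    unfolding determined_by_def by (intro bexI[of _ "\<lambda>y. F (restrict y I)"]) auto
qed

definition determined_by_vec :: "'i set \<Rightarrow> ('a \<Rightarrow> real^'m) \<Rightarrow> bool" where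
  "determined_by_vec I v \<longleftrightarrow> (\<forall>k. determined_by I (\<lambda>\<omega>. v \<omega> $ k))"

lemma determined_by_vec_const: "determined_by_vec I (\<lambda>\<omega>. c)"
  unfolding determined_by_vec_def by (simp add: determined_by_const)

lemma determined_by_vec_add:
  "determined_by_vec I u \<Longrightarrow> determined_by_vec I v \<Longrightarrow> determined_by_vec I (\<lambda>\<omega>. u \<omega> + v \<omega>)"
  unfolding determined_by_vec_def by (simp add: determined_by_add)

lemma determined_by_vec_uminus: "determined_by_vec I u \<Longrightarrow> determined_by_vec I (\<lambda>\<omega>. - u \<omega>)"
  unfolding determined_by_vec_def using determined_by_diff[OF determined_by_const[of I 0]] by simp

lemma determined_by_vec_scaleR:
  "determined_by I f \<Longrightarrow> determined_by_vec I v \<Longrightarrow> determined_by_vec I (\<lambda>\<omega>. f \<omega> *\<^sub>R v \<omega>)"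
  unfolding determined_by_vec_def by (simp add: determined_by_mult)

lemma determined_by_vec_vector_matrix_mult:
  "determined_by_vec I w \<Longrightarrow> determined_by_vec I (\<lambda>\<omega>. w \<omega> v* (L::real^'m^'k))"
  unfolding determined_by_vec_def vector_matrix_mult_def
  by (auto intro!: determined_by_sum determined_by_mult determined_by_const)

lemma determined_by_vec_matrix_vector_mult:
  "determined_by_vec I z \<Longrightarrow> determined_by_vec I (\<lambda>\<omega>. (L::real^'m^'k) *v z \<omega>)"
  unfolding determined_by_vec_def matrix_vector_mult_def
  by (auto intro!: determined_by_sum determined_by_mult determined_by_const)

lemma determined_by_inner:
  "determined_by_vec I u \<Longrightarrow> determined_by_vec I v \<Longrightarrow> determined_by I (\<lambda>\<omega>. (u \<omega> :: real^'m) \<bullet> v \<omega>)"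
  unfolding determined_by_vec_def inner_vec_def
  by (auto intro!: determined_by_sum determined_by_mult)

lemma integral_sum_mult_indep_centered:
  assumes "finite K" "I \<inter> J = {}"
    and c: "\<And>k. k \<in> K \<Longrightarrow> determined_by I (c k)" "\<And>k. k \<in> K \<Longrightarrow> integrable M (c k)"
    and z: "\<And>k. k \<in> K \<Longrightarrow> determined_by J (z k)" "\<And>k. k \<in> K \<Longrightarrow> integrable M (z k)"
      "\<And>k. k \<in> K \<Longrightarrow> (\<integral>\<omega>. z k \<omega> \<partial>M) = 0"
  shows "integrable M (\<lambda>\<omega>. \<Sum>k\<in>K. c k \<omega> * z k \<omega>)" "(\<integral>\<omega>. (\<Sum>k\<in>K. c k \<omega> * z k \<omega>) \<partial>M) = 0"
proof -
  have indep: "indep_var borel (c k) borel (z k)" if "k \<in> K" for k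
    using that by (intro indep_var_determined_by[OF assms(2) c(1) z(1)])
  show "integrable M (\<lambda>\<omega>. \<Sum>k\<in>K. c k \<omega> * z k \<omega>)"
    using indep_var_integrable[OF indep] c(2) z(2) by (intro Bochner_Integration.integrable_sum) auto
  show "(\<integral>\<omega>. (\<Sum>k\<in>K. c k \<omega> * z k \<omega>) \<partial>M) = 0"
    using indep_var_integrable[OF indep] indep_var_lebesgue_integral[OF indep] c(2) z(2,3)
    by (subst Bochner_Integration.integral_sum) auto
qed

lemma integral_sum_mult_indep_orthonormal_sq:
  assumes "finite K" "I \<inter> J = {}"
    and c: "\<And>k. k \<in> K \<Longrightarrow> determined_by I (c k)" "\<And>k. k \<in> K \<Longrightarrow> sq_integrable M (c k)"
    and z: "\<And>k. k \<in> K \<Longrightarrow> determined_by J (z k)" "centered_orthonormal M K z"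
  shows "integrable M (\<lambda>\<omega>. (\<Sum>k\<in>K. c k \<omega> * z k \<omega>)\<^sup>2)"
    "(\<integral>\<omega>. (\<Sum>k\<in>K. c k \<omega> * z k \<omega>)\<^sup>2 \<partial>M) = (\<Sum>k\<in>K. \<integral>\<omega>. (c k \<omega>)\<^sup>2 \<partial>M)"
proof -
  have sq: "(\<Sum>k\<in>K. c k \<omega> * z k \<omega>)\<^sup>2 = (\<Sum>k\<in>K. \<Sum>l\<in>K. (c k \<omega> * c l \<omega>) * (z k \<omega> * z l \<omega>))" for \<omega>
    by (simp add: power2_eq_square sum_product mult_ac)
  have indep: "indep_var borel (\<lambda>\<omega>. c k \<omega> * c l \<omega>) borel (\<lambda>\<omega>. z k \<omega> * z l \<omega>)"
    if "k \<in> K" "l \<in> K" for k l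
    using that by (intro indep_var_determined_by[OF assms(2)] determined_by_mult c z)
  have int: "integrable M (\<lambda>\<omega>. c k \<omega> * c l \<omega>)" "integrable M (\<lambda>\<omega>. z k \<omega> * z l \<omega>)"
    if "k \<in> K" "l \<in> K" for k l
    using that c(2) z(2) unfolding centered_orthonormal_def by (auto intro: sq_integrable_mult_integrable)
  show "integrable M (\<lambda>\<omega>. (\<Sum>k\<in>K. c k \<omega> * z k \<omega>)\<^sup>2)"
    unfolding sq using indep_var_integrable[OF indep int] by (intro Bochner_Integration.integrable_sum) auto
  have "(\<integral>\<omega>. (\<Sum>k\<in>K. c k \<omega> * z k \<omega>)\<^sup>2 \<partial>M)
      = (\<Sum>k\<in>K. \<Sum>l\<in>K. (\<integral>\<omega>. c k \<omega> * c l \<omega> \<partial>M) * (if k = l then 1 else 0))"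
    unfolding sq using indep_var_integrable[OF indep int] indep_var_lebesgue_integral[OF indep int] z(2)
    by (simp add: centered_orthonormal_def Bochner_Integration.integral_sum Bochner_Integration.integrable_sum)
  also have "\<dots> = (\<Sum>k\<in>K. \<integral>\<omega>. (c k \<omega>)\<^sup>2 \<partial>M)"
    using assms(1) by (simp add: if_distrib power2_eq_square cong: if_cong)
  finally show "(\<integral>\<omega>. (\<Sum>k\<in>K. c k \<omega> * z k \<omega>)\<^sup>2 \<partial>M) = (\<Sum>k\<in>K. \<integral>\<omega>. (c k \<omega>)\<^sup>2 \<partial>M)" .
qed

lemma integral_indep_affine_sq:
  assumes "I \<inter> J = {}"
    and x: "determined_by I x" "sq_integrable M x"
    and ab: "determined_by J a" "determined_by J b" "sq_integrable M a" "sq_integrable M b"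
    and uncorr: "(\<integral>\<omega>. a \<omega> * b \<omega> \<partial>M) = 0"
  shows "sq_integrable M (\<lambda>\<omega>. a \<omega> * x \<omega> + b \<omega>)"
    "(\<integral>\<omega>. (a \<omega> * x \<omega> + b \<omega>)\<^sup>2 \<partial>M) = (\<integral>\<omega>. (a \<omega>)\<^sup>2 \<partial>M) * (\<integral>\<omega>. (x \<omega>)\<^sup>2 \<partial>M) + (\<integral>\<omega>. (b \<omega>)\<^sup>2 \<partial>M)"
proof -
  have sq: "(a \<omega> * x \<omega> + b \<omega>)\<^sup>2 = (a \<omega>)\<^sup>2 * (x \<omega>)\<^sup>2 + 2 * (x \<omega> * (a \<omega> * b \<omega>)) + (b \<omega>)\<^sup>2" for \<omega>
    by (simp add: power2_eq_square algebra_simps)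
  have indep_sq: "indep_var borel (\<lambda>\<omega>. (a \<omega>)\<^sup>2) borel (\<lambda>\<omega>. (x \<omega>)\<^sup>2)"
    unfolding power2_eq_square using assms(1) x(1) ab(1)
    by (intro indep_var_determined_by[of J I] determined_by_mult) auto
  have indep_ab: "indep_var borel x borel (\<lambda>\<omega>. a \<omega> * b \<omega>)"
    using assms(1) x(1) ab(1,2) by (intro indep_var_determined_by[of I J] determined_by_mult) auto
  have int: "integrable M (\<lambda>\<omega>. (a \<omega>)\<^sup>2)" "integrable M (\<lambda>\<omega>. (x \<omega>)\<^sup>2)" "integrable M (\<lambda>\<omega>. (b \<omega>)\<^sup>2)"
    "integrable M x" "integrable M (\<lambda>\<omega>. a \<omega> * b \<omega>)"
    using x(2) ab(3,4) by (auto simp: sq_integrable_def intro: sq_integrable_integrable sq_integrable_mult_integrable)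
  note I1 = indep_var_integrable[OF indep_sq int(1,2)] indep_var_lebesgue_integral[OF indep_sq int(1,2)]
  note I2 = indep_var_integrable[OF indep_ab int(4,5)] indep_var_lebesgue_integral[OF indep_ab int(4,5)]
  have "integrable M (\<lambda>\<omega>. (a \<omega> * x \<omega> + b \<omega>)\<^sup>2)"
    unfolding sq using I1(1) I2(1) int(3) by auto
  then show "sq_integrable M (\<lambda>\<omega>. a \<omega> * x \<omega> + b \<omega>)"
    using x(2) ab(3,4) by (auto simp: sq_integrable_def)
  show "(\<integral>\<omega>. (a \<omega> * x \<omega> + b \<omega>)\<^sup>2 \<partial>M) = (\<integral>\<omega>. (a \<omega>)\<^sup>2 \<partial>M) * (\<integral>\<omega>. (x \<omega>)\<^sup>2 \<partial>M) + (\<integral>\<omega>. (b \<omega>)\<^sup>2 \<partial>M)"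
    unfolding sq using I1 I2 int(3) uncorr by simp
qed

end

section \<open>Second moments of the closed loop\<close>

lemma inner_Mmat: "K \<bullet> (Mmat B D *v K) = (B \<bullet> K)\<^sup>2 + (\<Sum>m\<in>UNIV. ((D *v K) $ m)\<^sup>2)"
proof -
  have "K \<bullet> (Mmat B D *v K) = (\<Sum>i\<in>UNIV. \<Sum>j\<in>UNIV. K$i * (B$i*B$j + (\<Sum>m\<in>UNIV. D$m$i * D$m$j)) * K$j)"
    by (simp add: inner_matrix_vector_mult_eq Mmat_def matrix_matrix_mult_def transpose_def)
  also have "\<dots> = (\<Sum>i\<in>UNIV. \<Sum>j\<in>UNIV. (K$i*B$i)*(B$j*K$j))
      + (\<Sum>i\<in>UNIV. \<Sum>j\<in>UNIV. \<Sum>m\<in>UNIV. (D$m$i*K$i) * (D$m$j * K$j))"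
  proof -
    have "K$i * (B$i*B$j + (\<Sum>m\<in>UNIV. D$m$i * D$m$j)) * K$j
        = (K$i*B$i)*(B$j*K$j) + (\<Sum>m\<in>UNIV. (D$m$i*K$i) * (D$m$j*K$j))" for i j
      by (simp add: algebra_simps sum_distrib_left sum_distrib_right)
    then show ?thesis by (simp add: sum.distrib)
  qed
  also have "(\<Sum>i\<in>UNIV. \<Sum>j\<in>UNIV. \<Sum>m\<in>UNIV. (D$m$i*K$i) * (D$m$j * K$j))
      = (\<Sum>i\<in>UNIV. \<Sum>m\<in>UNIV. \<Sum>j\<in>UNIV. (D$m$i*K$i) * (D$m$j * K$j))"
    by (rule sum.cong[OF refl], rule sum.swap)
  also have "\<dots> = (\<Sum>m\<in>UNIV. \<Sum>i\<in>UNIV. \<Sum>j\<in>UNIV. (D$m$i*K$i) * (D$m$j * K$j))"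
    by (rule sum.swap)
  also have "(\<Sum>i\<in>UNIV. \<Sum>j\<in>UNIV. (K$i*B$i)*(B$j*K$j)) + \<dots> = (B \<bullet> K)\<^sup>2 + (\<Sum>m\<in>UNIV. ((D *v K) $ m)\<^sup>2)"
    by (simp add: power2_eq_square inner_vec_def matrix_vector_mult_def sum_product mult_ac)
  finally show ?thesis .
qed

lemma VK_nonneg: "0 \<le> VK A B C D K"
proof -
  have "VK A B C D K = (A - B \<bullet> K)\<^sup>2 + C\<^sup>2 + (\<Sum>m\<in>UNIV. ((D *v K) $ m)\<^sup>2)"
    by (simp add: VK_def inner_Mmat power2_eq_square algebra_simps)
  then show ?thesis by (simp add: sum_nonneg)
qed

text \<open>The mean of \<^const>\<open>gauss_logpdf\<close> under the Gaussian itself, i.e. minus its differential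
  entropy.\<close>
definition gauss_neg_entropy :: "real^'n^'n \<Rightarrow> real" where
  "gauss_neg_entropy S = - (real CARD('n) / 2) * ln (2 * pi) - ln (det S) / 2 - real CARD('n) / 2"

lemma stage_cost_expand:
  fixes K q :: "real^'n" and R S :: "real^'n^'n"
  shows "Q * x\<^sup>2 + (- (x *\<^sub>R K) + q) \<bullet> (R *v (- (x *\<^sub>R K) + q)) + \<tau> * gauss_logpdf S (- (x *\<^sub>R K)) (- (x *\<^sub>R K) + q)
    = (Q + K \<bullet> (R *v K)) * x\<^sup>2 - x * (q \<bullet> (K v* R) + q \<bullet> (R *v K)) + q \<bullet> (R *v q)
      + \<tau> * (- (real CARD('n) / 2) * ln (2 * pi) - ln (det S) / 2) - (\<tau> / 2) * (q \<bullet> (matrix_inv S *v q))"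
proof -
  have neg: "R *v (- v) = - (R *v v)" for v :: "real^'n"
    by (simp add: matrix_vector_mult_def vec_eq_iff sum_negf)
  have "K \<bullet> (R *v q) = q \<bullet> (K v* R)"
    by (simp add: dot_lmul_matrix[symmetric] inner_commute)
  then show ?thesis
    by (simp add: gauss_logpdf_def neg matrix_vector_right_distrib matrix_vector_mult_scaleR
        inner_add_left inner_add_right power2_eq_square algebra_simps)
qed

text \<open>The hypotheses of the theorem, except the measurability of the noise, which already
  follows from the independence of the sources.\<close>
locale lqr_noise = indep_sources M "srcvar x0 wx wu xi"
  for M :: "'a measure" and x0 :: "'a \<Rightarrow> real" and wx :: "nat \<Rightarrow> 'a \<Rightarrow> real"
    and wu xi :: "nat \<Rightarrow> 'a \<Rightarrow> real^'n" +
  assumes x0_sq: "integrable M (\<lambda>\<omega>. (x0 \<omega>)\<^sup>2)"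
    and wx_sq: "\<And>t. integrable M (\<lambda>\<omega>. (wx t \<omega>)\<^sup>2)"
    and wx_mean: "\<And>t. (\<integral>\<omega>. wx t \<omega> \<partial>M) = 0"
    and wx_var: "\<And>t. (\<integral>\<omega>. (wx t \<omega>)\<^sup>2 \<partial>M) = 1"
    and wu_sq: "\<And>t i. integrable M (\<lambda>\<omega>. (wu t \<omega> $ i)\<^sup>2)"
    and wu_mean: "\<And>t i. (\<integral>\<omega>. wu t \<omega> $ i \<partial>M) = 0"
    and wu_cov: "\<And>t i j. (\<integral>\<omega>. wu t \<omega> $ i * wu t \<omega> $ j \<partial>M) = (if i = j then 1 else 0)"
    and xi_indep: "\<And>t. indep_vars (\<lambda>_. borel) (\<lambda>i \<omega>. xi t \<omega> $ i) UNIV"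
    and xi_normal: "\<And>t i. distributed M lborel (\<lambda>\<omega>. xi t \<omega> $ i) std_normal_density"
begin

lemma borel_measurable_source_components:
  "(fst :: real \<times> (real^'n) \<Rightarrow> real) \<in> borel_measurable borel"
  "(\<lambda>p :: real \<times> (real^'n). snd p $ k) \<in> borel_measurable borel"
  by (intro borel_measurable_continuous_onI continuous_intros)+

lemma determined_by_x0: "Init \<in> I \<Longrightarrow> determined_by I x0"
  using determined_by_source[OF _ borel_measurable_source_components(1), of Init I]
  by (simp add: srcvar_def)

lemma determined_by_wx: "Wx t \<in> I \<Longrightarrow> determined_by I (wx t)"
  using determined_by_source[OF _ borel_measurable_source_components(1), of "Wx t" I]
  by (simp add: srcvar_def)

lemma determined_by_vec_wu: "Wu t \<in> I \<Longrightarrow> determined_by_vec I (wu t)"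
  using determined_by_source[OF _ borel_measurable_source_components(2), of "Wu t" I]
  by (simp add: srcvar_def determined_by_vec_def)

lemma determined_by_vec_xi: "Xi t \<in> I \<Longrightarrow> determined_by_vec I (xi t)"
  using determined_by_source[OF _ borel_measurable_source_components(2), of "Xi t" I]
  by (simp add: srcvar_def determined_by_vec_def)

definition sources_before :: "nat \<Rightarrow> src set" where
  "sources_before t = {i. case i of Init \<Rightarrow> True | Wx s \<Rightarrow> s < t | Wu s \<Rightarrow> s < t | Xi s \<Rightarrow> s < t}"

definition sources_at :: "nat \<Rightarrow> src set" where
  "sources_at t = {Wx t, Wu t, Xi t}"

lemma sources_before_at_disjoint: "sources_before t \<inter> sources_at t = {}"
  by (auto simp: sources_before_def sources_at_def)

lemma sources_before_Suc: "sources_before (Suc t) = sources_before t \<union> sources_at t"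
  by (auto simp: sources_before_def sources_at_def split: src.splits)

lemma determined_by_traj: "determined_by (sources_before t) (traj A B C D x0 wx wu xi K S t)"
proof (induction t)
  case 0
  show ?case by (simp add: determined_by_x0 sources_before_def)
next
  case (Suc t)
  have now: "Wx t \<in> sources_before (Suc t)" "Wu t \<in> sources_before (Suc t)" "Xi t \<in> sources_before (Suc t)"
    by (auto simp: sources_before_Suc sources_at_def)
  show ?case
    unfolding traj.simps Let_def act_def
    by (intro determined_by_add determined_by_mult determined_by_const determined_by_wx
        determined_by_mono[OF _ Suc.IH] determined_by_inner determined_by_vec_add determined_by_vec_const
        determined_by_vec_vector_matrix_mult determined_by_vec_wu determined_by_vec_uminus
        determined_by_vec_scaleR determined_by_vec_matrix_vector_mult determined_by_vec_xi now)
      (auto simp: sources_before_Suc)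
qed

lemma centered_orthonormal_xi: "centered_orthonormal M UNIV (\<lambda>k \<omega>. xi t \<omega> $ k)"
proof -
  have moments: "sq_integrable M (\<lambda>\<omega>. xi t \<omega> $ k)" "(\<integral>\<omega>. xi t \<omega> $ k \<partial>M) = 0"
    "(\<integral>\<omega>. (xi t \<omega> $ k)\<^sup>2 \<partial>M) = 1" for k
  proof -
    note normal = xi_normal[of t k]
    have "integrable M (\<lambda>\<omega>. (xi t \<omega> $ k)\<^sup>2)"
      using distributed_integrable[OF normal, of "\<lambda>x. x\<^sup>2"] integrable_std_normal_moment[of 2]
      by (simp add: normal_density_nonneg)
    moreover have "(\<lambda>\<omega>. xi t \<omega> $ k) \<in> borel_measurable M"
      using determined_by_vec_xi[of t UNIV] unfolding determined_by_vec_def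
      by (blast intro: determined_by_measurable)
    ultimately show "sq_integrable M (\<lambda>\<omega>. xi t \<omega> $ k)"
      by (simp add: sq_integrable_def)
    show mean: "(\<integral>\<omega>. xi t \<omega> $ k \<partial>M) = 0"
      using standard_normal_distributed_expectation[OF normal] by simp
    show "(\<integral>\<omega>. (xi t \<omega> $ k)\<^sup>2 \<partial>M) = 1"
      using standard_normal_distributed_variance[OF normal] mean by simp
  qed
  have "(\<integral>\<omega>. xi t \<omega> $ k * xi t \<omega> $ l \<partial>M) = 0" if "k \<noteq> l" for k l
  proof -
    have "indep_var (PiM {k} (\<lambda>_. borel)) (\<lambda>\<omega>. restrict (\<lambda>i. xi t \<omega> $ i) {k})
        (PiM {l} (\<lambda>_. borel)) (\<lambda>\<omega>. restrict (\<lambda>i. xi t \<omega> $ i) {l})"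
      using that by (intro indep_var_restrict[OF xi_indep]) auto
    from indep_var_compose[OF this measurable_component_singleton measurable_component_singleton]
    have "indep_var borel (\<lambda>\<omega>. xi t \<omega> $ k) borel (\<lambda>\<omega>. xi t \<omega> $ l)"
      by (simp add: comp_def)
    from indep_var_lebesgue_integral[OF this sq_integrable_integrable[OF moments(1)]
        sq_integrable_integrable[OF moments(1)]]
    show ?thesis using moments(2) by simp
  qed
  then show ?thesis
    using moments unfolding centered_orthonormal_def by (auto simp: power2_eq_square)
qed

lemma centered_orthonormal_wu: "centered_orthonormal M UNIV (\<lambda>m \<omega>. wu t \<omega> $ m)"
proof -
  have "(\<lambda>\<omega>. wu t \<omega> $ m) \<in> borel_measurable M" for m
    using determined_by_vec_wu[of t UNIV] unfolding determined_by_vec_def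
    by (blast intro: determined_by_measurable)
  then show ?thesis
    using wu_sq wu_mean wu_cov by (simp add: centered_orthonormal_def sq_integrable_def)
qed

lemma centered_orthonormal_wx_wu:
  "centered_orthonormal M UNIV (\<lambda>j. case j of None \<Rightarrow> wx t | Some m \<Rightarrow> (\<lambda>\<omega>. wu t \<omega> $ m))"
proof -
  have wx: "sq_integrable M (wx t)"
    using determined_by_measurable[OF determined_by_wx[of t UNIV]] wx_sq by (simp add: sq_integrable_def)
  have indep: "indep_var borel (wx t) borel (\<lambda>\<omega>. wu t \<omega> $ m)" for m
    using determined_by_vec_wu[of t "{Wu t}"] unfolding determined_by_vec_def
    by (intro indep_var_determined_by[of "{Wx t}" "{Wu t}"] determined_by_wx) auto
  have wu: "integrable M (\<lambda>\<omega>. wu t \<omega> $ m)" for m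
    using centered_orthonormal_wu[of t] unfolding centered_orthonormal_def
    by (blast intro: sq_integrable_integrable)
  have "(\<integral>\<omega>. wx t \<omega> * wu t \<omega> $ m \<partial>M) = 0" for m
    using indep_var_lebesgue_integral[OF indep sq_integrable_integrable[OF wx] wu] wx_mean by simp
  then have cross: "(\<integral>\<omega>. wu t \<omega> $ m * wx t \<omega> \<partial>M) = 0" "(\<integral>\<omega>. wx t \<omega> * wu t \<omega> $ m \<partial>M) = 0" for m
    by (simp_all add: mult.commute)
  have wu: "sq_integrable M (\<lambda>\<omega>. wu t \<omega> $ m)" "(\<integral>\<omega>. wu t \<omega> $ m \<partial>M) = 0"
    "(\<integral>\<omega>. wu t \<omega> $ m * wu t \<omega> $ m' \<partial>M) = (if m = m' then 1 else 0)" for m m'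
    using centered_orthonormal_wu[of t] unfolding centered_orthonormal_def by auto
  define r where "r = (\<lambda>j. case j of None \<Rightarrow> wx t | Some m \<Rightarrow> (\<lambda>\<omega>. wu t \<omega> $ m))"
  have "sq_integrable M (r j) \<and> (\<integral>\<omega>. r j \<omega> \<partial>M) = 0" for j
    using wx wx_mean wu by (cases j) (simp_all add: r_def)
  moreover have "(\<integral>\<omega>. r j \<omega> * r k \<omega> \<partial>M) = (if j = k then 1 else 0)" for j k
    using wx_var[of t] cross wu(3) by (cases j; cases k) (simp_all add: r_def power2_eq_square)
  ultimately show ?thesis
    unfolding centered_orthonormal_def r_def[symmetric] by blast
qed

definition closed_loop_gain :: "real \<Rightarrow> real^'n \<Rightarrow> real \<Rightarrow> real^'n^'n \<Rightarrow> real^'n \<Rightarrow> nat \<Rightarrow> 'a \<Rightarrow> real"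
  where "closed_loop_gain A B C D K t \<omega> = A + wx t \<omega> * C - (B + wu t \<omega> v* D) \<bullet> K"

definition exploration_noise :: "real^'n \<Rightarrow> real^'n^'n \<Rightarrow> real^'n^'n \<Rightarrow> nat \<Rightarrow> 'a \<Rightarrow> real"
  where "exploration_noise B D S t \<omega> = ((B + wu t \<omega> v* D) v* msqrt S) \<bullet> xi t \<omega>"

lemma traj_Suc_eq:
  "traj A B C D x0 wx wu xi K S (Suc t) \<omega> =
     closed_loop_gain A B C D K t \<omega> * traj A B C D x0 wx wu xi K S t \<omega> + exploration_noise B D S t \<omega>"
  by (simp add: closed_loop_gain_def exploration_noise_def act_def Let_def inner_add_right
      dot_lmul_matrix[symmetric] algebra_simps)

lemma determined_by_closed_loop_gain: "determined_by {Wx t, Wu t} (closed_loop_gain A B C D K t)"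
  unfolding closed_loop_gain_def[abs_def]
  by (intro determined_by_diff determined_by_add determined_by_const determined_by_mult determined_by_wx
      determined_by_inner determined_by_vec_add determined_by_vec_const determined_by_vec_vector_matrix_mult
      determined_by_vec_wu) auto

lemma closed_loop_gain_moment:
  "sq_integrable M (closed_loop_gain A B C D K t)"
  "(\<integral>\<omega>. (closed_loop_gain A B C D K t \<omega>)\<^sup>2 \<partial>M) = VK A B C D K"
proof -
  define r where "r = (\<lambda>j. case j of None \<Rightarrow> wx t | Some m \<Rightarrow> (\<lambda>\<omega>. wu t \<omega> $ m))"
  define \<beta> where "\<beta> j = (case j of None \<Rightarrow> C | Some m \<Rightarrow> - (D *v K) $ m)" for j
  have gain: "closed_loop_gain A B C D K t \<omega> = (A - B \<bullet> K) + (\<Sum>j\<in>UNIV. \<beta> j * r j \<omega>)" for \<omega>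
  proof -
    have "(B + wu t \<omega> v* D) \<bullet> K = B \<bullet> K + (\<Sum>m\<in>UNIV. (D *v K) $ m * wu t \<omega> $ m)"
      by (simp only: inner_add_left dot_lmul_matrix) (simp add: inner_vec_def mult.commute)
    then show ?thesis
      by (simp add: closed_loop_gain_def r_def \<beta>_def UNIV_option_conv sum.reindex sum_negf)
  qed
  note on = integral_affine_orthonormal_mult[OF finite_class.finite_UNIV,
      OF centered_orthonormal_wx_wu[of t, folded r_def], of "A - B \<bullet> K" \<beta> "A - B \<bullet> K" \<beta>]
  have "closed_loop_gain A B C D K t \<in> borel_measurable M"
    using determined_by_closed_loop_gain by (rule determined_by_measurable)
  then show "sq_integrable M (closed_loop_gain A B C D K t)"
    using on(1) by (simp add: sq_integrable_def gain power2_eq_square)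
  have "(\<integral>\<omega>. (closed_loop_gain A B C D K t \<omega>)\<^sup>2 \<partial>M) = (A - B \<bullet> K)\<^sup>2 + (\<Sum>j\<in>UNIV. (\<beta> j)\<^sup>2)"
    using on(2) by (simp add: gain power2_eq_square)
  also have "\<dots> = VK A B C D K"
    by (simp add: VK_def inner_Mmat UNIV_option_conv sum.reindex \<beta>_def power2_eq_square algebra_simps)
  finally show "(\<integral>\<omega>. (closed_loop_gain A B C D K t \<omega>)\<^sup>2 \<partial>M) = VK A B C D K" .
qed

lemma input_gain_moment:
  "sq_integrable M (\<lambda>\<omega>. (B + wu t \<omega> v* D) $ i)"
  "(\<integral>\<omega>. (B + wu t \<omega> v* D) $ i * (B + wu t \<omega> v* D) $ j \<partial>M) = Mmat B D $ i $ j"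
proof -
  have entry: "(wu t \<omega> v* D) $ i = (\<Sum>m\<in>UNIV. D$m$i * wu t \<omega> $ m)" for \<omega> i
    by (simp add: vector_matrix_mult_def mult.commute)
  note on = integral_affine_orthonormal_mult[OF finite_class.finite_UNIV
      centered_orthonormal_wu[of t]]
  have "determined_by {Wu t} (\<lambda>\<omega>. (B + wu t \<omega> v* D) $ i)"
    using determined_by_vec_add[OF determined_by_vec_const
        determined_by_vec_vector_matrix_mult[OF determined_by_vec_wu]]
    unfolding determined_by_vec_def by blast
  then show "sq_integrable M (\<lambda>\<omega>. (B + wu t \<omega> v* D) $ i)"
    using on(1)[of "B$i" "\<lambda>m. D$m$i" "B$i" "\<lambda>m. D$m$i"]
    by (simp add: sq_integrable_def determined_by_measurable entry power2_eq_square)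
  show "(\<integral>\<omega>. (B + wu t \<omega> v* D) $ i * (B + wu t \<omega> v* D) $ j \<partial>M) = Mmat B D $ i $ j"
    using on(2)[of "B$i" "\<lambda>m. D$m$i" "B$j" "\<lambda>m. D$m$j"]
    by (simp add: entry Mmat_def matrix_matrix_mult_def transpose_def)
qed

lemma input_gain_matrix_moment:
  "determined_by {Wu t} (\<lambda>\<omega>. ((B + wu t \<omega> v* D) v* L) $ k)"
  "sq_integrable M (\<lambda>\<omega>. ((B + wu t \<omega> v* D) v* L) $ k)"
  "(\<Sum>k\<in>UNIV. \<integral>\<omega>. (((B + wu t \<omega> v* D) v* L) $ k)\<^sup>2 \<partial>M) = Mmat B D \<bullet> (L ** transpose L)"
proof -
  have entry: "((B + wu t \<omega> v* D) v* L) $ k = (\<Sum>i\<in>UNIV. L$i$k * (B + wu t \<omega> v* D) $ i)" for k \<omega>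
    by (simp add: vector_matrix_mult_def mult.commute)
  show "determined_by {Wu t} (\<lambda>\<omega>. ((B + wu t \<omega> v* D) v* L) $ k)"
    using determined_by_vec_vector_matrix_mult[OF determined_by_vec_add[OF determined_by_vec_const
          determined_by_vec_vector_matrix_mult[OF determined_by_vec_wu]]]
    unfolding determined_by_vec_def by blast
  show "sq_integrable M (\<lambda>\<omega>. ((B + wu t \<omega> v* D) v* L) $ k)"
    unfolding entry by (intro sq_integrable_sum sq_integrable_cmult input_gain_moment(1)) auto
  have "(\<integral>\<omega>. (((B + wu t \<omega> v* D) v* L) $ k)\<^sup>2 \<partial>M)
      = (\<Sum>i\<in>UNIV. \<Sum>j\<in>UNIV. Mmat B D $ i $ j * (L$i$k * L$j$k))" for k
  proof -
    have "(\<integral>\<omega>. (((B + wu t \<omega> v* D) v* L) $ k)\<^sup>2 \<partial>M) = (\<integral>\<omega>. (\<Sum>i\<in>UNIV. \<Sum>j\<in>UNIV. (L$i$k * L$j$k) *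
        ((B + wu t \<omega> v* D) $ i * (B + wu t \<omega> v* D) $ j)) \<partial>M)"
      unfolding entry by (simp add: power2_eq_square sum_product mult_ac)
    also have "\<dots> = (\<Sum>i\<in>UNIV. \<Sum>j\<in>UNIV. Mmat B D $ i $ j * (L$i$k * L$j$k))"
      using sq_integrable_mult_integrable[OF input_gain_moment(1) input_gain_moment(1)]
      by (simp add: input_gain_moment(2)[simplified] mult.commute)
    finally show ?thesis .
  qed
  then have "(\<Sum>k\<in>UNIV. \<integral>\<omega>. (((B + wu t \<omega> v* D) v* L) $ k)\<^sup>2 \<partial>M)
      = (\<Sum>k\<in>UNIV. \<Sum>i\<in>UNIV. \<Sum>j\<in>UNIV. Mmat B D $ i $ j * (L$i$k * L$j$k))"
    by simp
  also have "\<dots> = (\<Sum>i\<in>UNIV. \<Sum>k\<in>UNIV. \<Sum>j\<in>UNIV. Mmat B D $ i $ j * (L$i$k * L$j$k))"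
    by (rule sum.swap)
  also have "\<dots> = (\<Sum>i\<in>UNIV. \<Sum>j\<in>UNIV. \<Sum>k\<in>UNIV. Mmat B D $ i $ j * (L$i$k * L$j$k))"
    by (rule sum.cong[OF refl], rule sum.swap)
  also have "\<dots> = Mmat B D \<bullet> (L ** transpose L)"
    by (simp add: inner_matrix_eq matrix_matrix_mult_def transpose_def sum_distrib_left)
  finally show "(\<Sum>k\<in>UNIV. \<integral>\<omega>. (((B + wu t \<omega> v* D) v* L) $ k)\<^sup>2 \<partial>M) = Mmat B D \<bullet> (L ** transpose L)" .
qed

lemma exploration_noise_moments:
  "sq_integrable M (exploration_noise B D S t)"
  "(\<integral>\<omega>. (exploration_noise B D S t \<omega>)\<^sup>2 \<partial>M) = Mmat B D \<bullet> (msqrt S ** transpose (msqrt S))"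
  "(\<integral>\<omega>. closed_loop_gain A B C D K t \<omega> * exploration_noise B D S t \<omega> \<partial>M) = 0"
proof -
  define c where "c k \<omega> = ((B + wu t \<omega> v* D) v* msqrt S) $ k" for k \<omega>
  define z where "z k \<omega> = xi t \<omega> $ k" for k \<omega>
  have noise: "exploration_noise B D S t \<omega> = (\<Sum>k\<in>UNIV. c k \<omega> * z k \<omega>)" for \<omega>
    by (simp add: exploration_noise_def inner_vec_def c_def z_def)
  have dc: "determined_by {Wx t, Wu t} (c k)" and sc: "sq_integrable M (c k)" for k
    unfolding c_def[abs_def] using input_gain_matrix_moment(1,2)
    by (blast intro: determined_by_mono[of "{Wu t}"])+
  have dz: "determined_by {Xi t} (z k)" for k
    using determined_by_vec_xi[of t "{Xi t}"] unfolding determined_by_vec_def z_def[abs_def] by blast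
  have z: "centered_orthonormal M UNIV z"
    using centered_orthonormal_xi unfolding z_def[abs_def] .
  note sq = integral_sum_mult_indep_orthonormal_sq[OF finite_class.finite_UNIV _ dc sc dz z]
  have "determined_by {Wx t, Wu t, Xi t} (exploration_noise B D S t)"
    unfolding noise[abs_def]
    by (intro determined_by_sum determined_by_mult determined_by_mono[OF _ dc] determined_by_mono[OF _ dz]) auto
  then show "sq_integrable M (exploration_noise B D S t)"
    using sq(1) by (simp add: sq_integrable_def determined_by_measurable noise)
  show "(\<integral>\<omega>. (exploration_noise B D S t \<omega>)\<^sup>2 \<partial>M) = Mmat B D \<bullet> (msqrt S ** transpose (msqrt S))"
    using sq(2) input_gain_matrix_moment(3) by (simp add: noise c_def)
  have "integrable M (\<lambda>\<omega>. closed_loop_gain A B C D K t \<omega> * c k \<omega>)" for k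
    using closed_loop_gain_moment(1) sc by (rule sq_integrable_mult_integrable)
  moreover have "integrable M (z k)" "(\<integral>\<omega>. z k \<omega> \<partial>M) = 0" for k
    using z unfolding centered_orthonormal_def by (auto intro: sq_integrable_integrable)
  ultimately have "(\<integral>\<omega>. (\<Sum>k\<in>UNIV. (closed_loop_gain A B C D K t \<omega> * c k \<omega>) * z k \<omega>) \<partial>M) = 0"
    by (intro integral_sum_mult_indep_centered(2)[of UNIV "{Wx t, Wu t}" "{Xi t}"]
        determined_by_mult determined_by_closed_loop_gain dc dz) auto
  then show "(\<integral>\<omega>. closed_loop_gain A B C D K t \<omega> * exploration_noise B D S t \<omega> \<partial>M) = 0"
    by (simp add: noise sum_distrib_left mult.assoc)
qed

lemma traj_second_moment:
  "sq_integrable M (traj A B C D x0 wx wu xi K S t)"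
  "(\<integral>\<omega>. (traj A B C D x0 wx wu xi K S (Suc t) \<omega>)\<^sup>2 \<partial>M) =
     VK A B C D K * (\<integral>\<omega>. (traj A B C D x0 wx wu xi K S t \<omega>)\<^sup>2 \<partial>M)
     + Mmat B D \<bullet> (msqrt S ** transpose (msqrt S))"
proof -
  have step: "sq_integrable M (traj A B C D x0 wx wu xi K S (Suc t))"
    "(\<integral>\<omega>. (traj A B C D x0 wx wu xi K S (Suc t) \<omega>)\<^sup>2 \<partial>M) =
       VK A B C D K * (\<integral>\<omega>. (traj A B C D x0 wx wu xi K S t \<omega>)\<^sup>2 \<partial>M)
       + Mmat B D \<bullet> (msqrt S ** transpose (msqrt S))"
    if "sq_integrable M (traj A B C D x0 wx wu xi K S t)" for t
  proof -
    have gain: "determined_by (sources_at t) (closed_loop_gain A B C D K t)"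
      by (rule determined_by_mono[OF _ determined_by_closed_loop_gain]) (auto simp: sources_at_def)
    have noise: "determined_by (sources_at t) (exploration_noise B D S t)"
      unfolding exploration_noise_def[abs_def] sources_at_def
      by (intro determined_by_inner determined_by_vec_vector_matrix_mult determined_by_vec_add
          determined_by_vec_const determined_by_vec_wu determined_by_vec_xi) auto
    note affine = integral_indep_affine_sq[OF sources_before_at_disjoint determined_by_traj that
        gain noise closed_loop_gain_moment(1) exploration_noise_moments(1) exploration_noise_moments(3)]
    show "sq_integrable M (traj A B C D x0 wx wu xi K S (Suc t))"
      using affine(1) by (simp add: traj_Suc_eq[abs_def])
    show "(\<integral>\<omega>. (traj A B C D x0 wx wu xi K S (Suc t) \<omega>)\<^sup>2 \<partial>M) =
       VK A B C D K * (\<integral>\<omega>. (traj A B C D x0 wx wu xi K S t \<omega>)\<^sup>2 \<partial>M)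
       + Mmat B D \<bullet> (msqrt S ** transpose (msqrt S))"
      using affine(2) by (simp only: traj_Suc_eq closed_loop_gain_moment(2) exploration_noise_moments(2))
  qed
  show sq: "sq_integrable M (traj A B C D x0 wx wu xi K S t)"
  proof (induction t)
    case 0
    show ?case
      using determined_by_measurable[OF determined_by_x0[of UNIV]] x0_sq by (simp add: sq_integrable_def)
  next
    case (Suc t)
    then show ?case by (rule step(1))
  qed
  show "(\<integral>\<omega>. (traj A B C D x0 wx wu xi K S (Suc t) \<omega>)\<^sup>2 \<partial>M) =
     VK A B C D K * (\<integral>\<omega>. (traj A B C D x0 wx wu xi K S t \<omega>)\<^sup>2 \<partial>M)
     + Mmat B D \<bullet> (msqrt S ** transpose (msqrt S))"
    using sq by (rule step(2))
qed

lemma integral_stage_cost: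
  fixes Q \<tau> :: real and R :: "real^'n^'n"
  assumes S: "pos_def_mat S"
  shows "(\<integral>\<omega>. (let x = traj A B C D x0 wx wu xi K S t \<omega>; u = act S xi K t x \<omega> in
              Q * x\<^sup>2 + u \<bullet> (R *v u) + \<tau> * gauss_logpdf S (- (x *\<^sub>R K)) u) \<partial>M)
     = (Q + K \<bullet> (R *v K)) * (\<integral>\<omega>. (traj A B C D x0 wx wu xi K S t \<omega>)\<^sup>2 \<partial>M) + R \<bullet> S
       + \<tau> * gauss_neg_entropy S"
proof -
  define X where "X = traj A B C D x0 wx wu xi K S t"
  define q where "q \<omega> = msqrt S *v xi t \<omega>" for \<omega>
  define l where "l \<omega> = q \<omega> \<bullet> (K v* R) + q \<omega> \<bullet> (R *v K)" for \<omega>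
  define c0 where "c0 = - (real CARD('n) / 2) * ln (2 * pi) - ln (det S) / 2"
  have stage: "(let x = X \<omega>; u = act S xi K t x \<omega> in Q * x\<^sup>2 + u \<bullet> (R *v u) + \<tau> * gauss_logpdf S (- (x *\<^sub>R K)) u)
    = (Q + K \<bullet> (R *v K)) * (X \<omega>)\<^sup>2 - X \<omega> * l \<omega> + q \<omega> \<bullet> (R *v q \<omega>) + \<tau> * c0
      - (\<tau> / 2) * (q \<omega> \<bullet> (matrix_inv S *v q \<omega>))" for \<omega>
    by (simp only: Let_def act_def q_def[symmetric] stage_cost_expand l_def c0_def)
  note lin = integral_linear_orthonormal[OF centered_orthonormal_xi[of t], of "msqrt S", folded q_def]
  note quad = integral_quadratic_form_orthonormal[OF centered_orthonormal_xi[of t], of "msqrt S", folded q_def,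
      unfolded msqrt_factorization[OF S]]
  have l: "integrable M l" "(\<integral>\<omega>. l \<omega> \<partial>M) = 0"
    unfolding l_def using lin by simp_all
  have "determined_by (sources_at t) l"
    unfolding l_def[abs_def] q_def sources_at_def
    by (intro determined_by_add determined_by_inner
        determined_by_vec_matrix_vector_mult determined_by_vec_xi determined_by_vec_const) auto
  then have indep: "indep_var borel X borel l"
    unfolding X_def by (rule indep_var_determined_by[OF sources_before_at_disjoint determined_by_traj])
  have X: "integrable M X"
    unfolding X_def by (rule sq_integrable_integrable[OF traj_second_moment(1)])
  have Xl: "integrable M (\<lambda>\<omega>. X \<omega> * l \<omega>)" "(\<integral>\<omega>. X \<omega> * l \<omega> \<partial>M) = 0"
    using indep_var_integrable[OF indep X l(1)] indep_var_lebesgue_integral[OF indep X l(1)] l(2) by simp_all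
  have X2: "integrable M (\<lambda>\<omega>. (X \<omega>)\<^sup>2)"
    using traj_second_moment(1) unfolding X_def sq_integrable_def by blast
  have inv: "matrix_inv S \<bullet> S = real CARD('n)"
    using inner_transpose_matrix_inv[OF pos_def_mat_invertible[OF S]]
      transpose_matrix_inv_symmetric[OF _ pos_def_mat_invertible[OF S]] S
    by (simp add: pos_def_mat_def)
  show ?thesis
    unfolding X_def[symmetric] stage
    using X2 Xl quad[of R] quad[of "matrix_inv S"] inv
    by (simp add: gauss_neg_entropy_def c0_def prob_space algebra_simps)
qed

end

section \<open>Closed forms and gradients\<close>

lemma summable_discounted_affine_recurrence:
  fixes m :: "nat \<Rightarrow> real"
  assumes rec: "\<And>t. m (Suc t) = V * m t + T"
    and nonneg: "0 \<le> m 0" "0 \<le> V" "0 \<le> T" and \<gamma>: "0 \<le> \<gamma>" "\<gamma> < 1" "\<gamma> * V < 1"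
  shows "summable (\<lambda>t. \<gamma> ^ t * m t)"
proof -
  define \<sigma> where "\<sigma> = (m 0 + \<gamma> * T / (1 - \<gamma>)) / (1 - \<gamma> * V)"
  have "\<sigma> * (1 - \<gamma> * V) = m 0 + \<gamma> * T / (1 - \<gamma>)"
    using \<gamma>(3) unfolding \<sigma>_def by simp
  then have \<sigma>: "\<sigma> = m 0 + \<gamma> * V * \<sigma> + \<gamma> * T / (1 - \<gamma>)"
    by (simp add: algebra_simps)
  have shift: "(\<Sum>t<Suc N. \<gamma> ^ t * m t) = m 0 + \<gamma> * V * (\<Sum>t<N. \<gamma> ^ t * m t) + \<gamma> * T * (\<Sum>t<N. \<gamma> ^ t)" for N
    by (simp only: sum.lessThan_Suc_shift rec)
      (simp add: sum_distrib_left sum.distrib algebra_simps)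
  have geom: "(\<Sum>t<N. \<gamma> ^ t) \<le> 1 / (1 - \<gamma>)" for N
    using \<gamma> by (simp add: sum_gp_strict divide_right_mono)
  have "(\<Sum>t<N. \<gamma> ^ t * m t) \<le> \<sigma>" for N
  proof (induction N)
    case 0
    show ?case unfolding \<sigma>_def using nonneg \<gamma> by simp
  next
    case (Suc N)
    have "(\<Sum>t<Suc N. \<gamma> ^ t * m t) \<le> m 0 + \<gamma> * V * \<sigma> + \<gamma> * T * (1 / (1 - \<gamma>))"
      unfolding shift using Suc.IH geom[of N] nonneg \<gamma>
      by (intro add_mono mult_left_mono order.refl) auto
    then show ?case using \<sigma> by simp
  qed
  moreover have "0 \<le> m t" for t
    using nonneg by (induction t) (simp_all add: rec)
  ultimately show ?thesis
    using \<gamma>(1) by (intro summableI_nonneg_bounded) auto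
qed

lemma sums_discounted_affine_recurrence:
  fixes m :: "nat \<Rightarrow> real"
  assumes rec: "\<And>t. m (Suc t) = V * m t + T"
    and nonneg: "0 \<le> m 0" "0 \<le> V" "0 \<le> T" and \<gamma>: "0 \<le> \<gamma>" "\<gamma> < 1" "\<gamma> * V < 1"
  shows "(\<lambda>t. \<gamma> ^ t * m t) sums ((m 0 + \<gamma> * T / (1 - \<gamma>)) / (1 - \<gamma> * V))"
proof -
  obtain s where s: "(\<lambda>t. \<gamma> ^ t * m t) sums s"
    using summable_discounted_affine_recurrence[OF assms] by (auto simp: summable_def)
  have "(\<lambda>t. \<gamma> * V * (\<gamma> ^ t * m t) + \<gamma> * T * \<gamma> ^ t) sums (\<gamma> * V * s + \<gamma> * T * (1 / (1 - \<gamma>)))"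
    using \<gamma> by (intro sums_add sums_mult s geometric_sums) auto
  then have "(\<lambda>t. \<gamma> ^ Suc t * m (Suc t)) sums (\<gamma> * V * s + \<gamma> * T / (1 - \<gamma>))"
    by (simp add: rec algebra_simps)
  then have "(\<lambda>t. \<gamma> ^ t * m t) sums (\<gamma> * V * s + \<gamma> * T / (1 - \<gamma>) + m 0)"
    using sums_Suc_iff[of "\<lambda>t. \<gamma> ^ t * m t"] by simp
  then have "s = m 0 + \<gamma> * V * s + \<gamma> * T / (1 - \<gamma>)"
    using s sums_unique2 by fastforce
  then have "s * (1 - \<gamma> * V) = m 0 + \<gamma> * T / (1 - \<gamma>)"
    by (simp add: algebra_simps)
  then have "s = (m 0 + \<gamma> * T / (1 - \<gamma>)) / (1 - \<gamma> * V)"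
    using \<gamma>(3) by (simp add: eq_divide_eq)
  with s show ?thesis by simp
qed

definition discounted_moment :: "real \<Rightarrow> real \<Rightarrow> real \<Rightarrow> real \<Rightarrow> real" where
  "discounted_moment \<mu> \<gamma> T V = (\<mu> + \<gamma> * T / (1 - \<gamma>)) / (1 - \<gamma> * V)"

context lqr_noise
begin

lemma sums_traj_second_moment:
  assumes S: "pos_def_mat S" and \<gamma>: "0 \<le> \<gamma>" "\<gamma> < 1" "\<gamma> * VK A B C D K < 1"
  shows "(\<lambda>t. \<gamma> ^ t * (\<integral>\<omega>. (traj A B C D x0 wx wu xi K S t \<omega>)\<^sup>2 \<partial>M))
    sums discounted_moment (\<integral>\<omega>. (x0 \<omega>)\<^sup>2 \<partial>M) \<gamma> (Mmat B D \<bullet> S) (VK A B C D K)"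
proof -
  define m where "m t = (\<integral>\<omega>. (traj A B C D x0 wx wu xi K S t \<omega>)\<^sup>2 \<partial>M)" for t
  have rec: "m (Suc t) = VK A B C D K * m t + Mmat B D \<bullet> S" for t
    using traj_second_moment(2)[of A B C D K S t] unfolding m_def msqrt_factorization[OF S] .
  have m0: "m 0 = (\<integral>\<omega>. (x0 \<omega>)\<^sup>2 \<partial>M)"
    by (simp add: m_def)
  have T: "0 \<le> Mmat B D \<bullet> S"
    using exploration_noise_moments(2)[of B D S 0] unfolding msqrt_factorization[OF S]
    by (metis integral_nonneg_AE AE_I2 zero_le_power2)
  have "0 \<le> m 0" by (simp add: m_def)
  from sums_discounted_affine_recurrence[of m, OF rec this VK_nonneg T \<gamma>]
  show ?thesis
    unfolding discounted_moment_def m0 by (simp add: m_def)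
qed

lemma S_KS_closed_form:
  assumes "pos_def_mat S" "0 \<le> \<gamma>" "\<gamma> < 1" "\<gamma> * VK A B C D K < 1"
  shows "S_KS M A B C D \<gamma> x0 wx wu xi K S
    = discounted_moment (\<integral>\<omega>. (x0 \<omega>)\<^sup>2 \<partial>M) \<gamma> (Mmat B D \<bullet> S) (VK A B C D K)"
  unfolding S_KS_def using sums_unique[OF sums_traj_second_moment[OF assms]] by simp

lemma cost_f_closed_form:
  assumes "pos_def_mat S" "0 \<le> \<gamma>" "\<gamma> < 1" "\<gamma> * VK A B C D K < 1"
  shows "cost_f M A B C D Q R \<gamma> \<tau> x0 wx wu xi K S
    = (Q + K \<bullet> (R *v K)) * discounted_moment (\<integral>\<omega>. (x0 \<omega>)\<^sup>2 \<partial>M) \<gamma> (Mmat B D \<bullet> S) (VK A B C D K)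
      + (R \<bullet> S + \<tau> * gauss_neg_entropy S) / (1 - \<gamma>)"
proof -
  have "(\<lambda>t. (Q + K \<bullet> (R *v K)) * (\<gamma> ^ t * (\<integral>\<omega>. (traj A B C D x0 wx wu xi K S t \<omega>)\<^sup>2 \<partial>M))
      + (R \<bullet> S + \<tau> * gauss_neg_entropy S) * \<gamma> ^ t)
    sums ((Q + K \<bullet> (R *v K)) * discounted_moment (\<integral>\<omega>. (x0 \<omega>)\<^sup>2 \<partial>M) \<gamma> (Mmat B D \<bullet> S) (VK A B C D K)
      + (R \<bullet> S + \<tau> * gauss_neg_entropy S) * (1 / (1 - \<gamma>)))"
    using assms by (intro sums_add sums_mult sums_traj_second_moment geometric_sums) auto
  then show ?thesis
    unfolding cost_f_def integral_stage_cost[OF assms(1)]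
    by (simp add: sums_unique[symmetric] algebra_simps add_divide_distrib)
qed

end

lemma Mmat_symmetric: "transpose (Mmat B D) = Mmat B D"
  by (simp add: Mmat_def transpose_def vec_eq_iff matrix_matrix_mult_def mult.commute)

lemma has_derivative_quadratic_form:
  fixes R :: "real^'n^'n"
  assumes "transpose R = R"
  shows "((\<lambda>x. x \<bullet> (R *v x)) has_derivative (\<lambda>h. (2 *\<^sub>R (R *v x)) \<bullet> h)) (at x within s)"
proof -
  have "((\<lambda>x. x \<bullet> (R *v x)) has_derivative (\<lambda>h. x \<bullet> (R *v h) + h \<bullet> (R *v x))) (at x within s)"
    by (intro has_derivative_inner has_derivative_ident bounded_linear_imp_has_derivative
        matrix_vector_mul_bounded_linear)
  moreover have "x \<bullet> (R *v h) = h \<bullet> (R *v x)" for h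
    using dot_lmul_matrix[of x R h] assms
    by (metis inner_commute transpose_matrix_vector)
  ultimately show ?thesis
    by (simp add: inner_commute[of "R *v x"])
qed

lemma has_derivative_VK:
  "(VK A B C D has_derivative (\<lambda>h. (2 *\<^sub>R (Mmat B D *v K) - (2 * A) *\<^sub>R B) \<bullet> h)) (at K within s)"
proof -
  have "((\<lambda>x. A\<^sup>2 + C\<^sup>2 + x \<bullet> (Mmat B D *v x) - 2 * A * (B \<bullet> x)) has_derivative
      (\<lambda>h. 0 + 0 + (2 *\<^sub>R (Mmat B D *v K)) \<bullet> h - 2 * A * (B \<bullet> h))) (at K within s)"
    by (intro has_derivative_diff has_derivative_add has_derivative_const
        has_derivative_quadratic_form[OF Mmat_symmetric] has_derivative_mult_right
        has_derivative_inner_right has_derivative_ident)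
  then show ?thesis
    unfolding VK_def[abs_def] by (rule has_derivative_eq_rhs) (auto simp: inner_diff_left)
qed

lemma has_derivative_closed_form_K:
  fixes R :: "real^'n^'n"
  assumes R: "transpose R = R" and V: "\<gamma> * VK A B C D K < 1"
  shows "((\<lambda>K'. (Q + K' \<bullet> (R *v K')) * discounted_moment \<mu> \<gamma> T (VK A B C D K') + c) has_derivative
     (\<lambda>h. (discounted_moment \<mu> \<gamma> T (VK A B C D K) *\<^sub>R EK \<gamma> A B C D Q R K) \<bullet> h)) (at K)"
proof -
  define \<beta> where "\<beta> = \<mu> + \<gamma> * T / (1 - \<gamma>)"
  define N where "N = Q + K \<bullet> (R *v K)"
  define Dn where "Dn = 1 - \<gamma> * VK A B C D K"
  have Dn: "Dn \<noteq> 0" using V by (simp add: Dn_def)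
  have moment: "discounted_moment \<mu> \<gamma> T V = \<beta> / (1 - \<gamma> * V)" for V
    by (simp add: discounted_moment_def \<beta>_def)
  have "((\<lambda>K'. (Q + K' \<bullet> (R *v K')) * (\<beta> / (1 - \<gamma> * VK A B C D K')) + c) has_derivative
      (\<lambda>h. N * ((0 * Dn - \<beta> * (0 - \<gamma> * ((2 *\<^sub>R (Mmat B D *v K) - (2 * A) *\<^sub>R B) \<bullet> h))) / (Dn * Dn))
        + (0 + (2 *\<^sub>R (R *v K)) \<bullet> h) * (\<beta> / Dn) + 0)) (at K)"
    unfolding N_def Dn_def
    by (intro has_derivative_add has_derivative_mult has_derivative_const has_derivative_divide'
        has_derivative_diff has_derivative_mult_right has_derivative_VK has_derivative_quadratic_form R)
      (use V in simp)
  moreover have "N * ((0 * Dn - \<beta> * (0 - \<gamma> * ((2 *\<^sub>R (Mmat B D *v K) - (2 * A) *\<^sub>R B) \<bullet> h))) / (Dn * Dn))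
        + (0 + (2 *\<^sub>R (R *v K)) \<bullet> h) * (\<beta> / Dn) + 0
      = ((\<beta> / Dn) *\<^sub>R EK \<gamma> A B C D Q R K) \<bullet> h" for h
    using Dn
    by (simp add: EK_def PK_def N_def[symmetric] Dn_def[symmetric] inner_add_left inner_diff_left
        field_simps)
  ultimately show ?thesis
    unfolding moment Dn_def by simp
qed

lemma has_derivative_ln_det:
  fixes S :: "real^'n^'n"
  assumes S: "pos_def_mat S"
  shows "((\<lambda>S'. ln (det S')) has_derivative (\<lambda>H. matrix_inv S \<bullet> H)) (at S within X)"
proof -
  have inv: "invertible S" by (rule pos_def_mat_invertible[OF S])
  have sym: "transpose (matrix_inv S) = matrix_inv S"
    using S inv by (intro transpose_matrix_inv_symmetric) (auto simp: pos_def_mat_def)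
  have "((\<lambda>S'. ln (det S')) has_derivative
      (\<lambda>H. det S * (transpose (matrix_inv S) \<bullet> H) * inverse (det S))) (at S within X)"
    by (rule has_derivative_ln[OF pos_def_mat_det_pos[OF S] has_derivative_det[OF inv]])
  then show ?thesis
    by (rule has_derivative_eq_rhs) (use sym pos_def_mat_det_pos[OF S] in auto)
qed

lemma has_derivative_closed_form_S:
  fixes R S :: "real^'n^'n"
  assumes R: "transpose R = R" and S: "pos_def_mat S" and \<gamma>: "\<gamma> < 1" "\<gamma> * VK A B C D K < 1"
  shows "((\<lambda>S'. (Q + K \<bullet> (R *v K)) * discounted_moment \<mu> \<gamma> (Mmat B D \<bullet> S') (VK A B C D K)
      + (R \<bullet> S' + \<tau> * gauss_neg_entropy S') / (1 - \<gamma>)) has_derivative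
     (\<lambda>H. ((1 / (1 - \<gamma>)) *\<^sub>R (transpose (R + (\<gamma> * PK \<gamma> A B C D Q R K) *\<^sub>R Mmat B D)
        - (\<tau> / 2) *\<^sub>R matrix_inv S)) \<bullet> H)) (at S within X)"
proof -
  define N where "N = Q + K \<bullet> (R *v K)"
  define Dn where "Dn = 1 - \<gamma> * VK A B C D K"
  have Dn: "Dn \<noteq> 0" using \<gamma> by (simp add: Dn_def)
  define e where "e = 1 - \<gamma>"
  have e: "e \<noteq> 0" using \<gamma> by (simp add: e_def)
  define a0 where "a0 = N * \<mu> / Dn - \<tau> * (real CARD('n) / 2) * (ln (2 * pi) + 1) / e"
  define a1 where "a1 = N * \<gamma> / (e * Dn)"
  define a2 where "a2 = 1 / e"
  define a3 where "a3 = - \<tau> / (2 * e)"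
  have affine: "N * discounted_moment \<mu> \<gamma> (Mmat B D \<bullet> S') (VK A B C D K)
      + (R \<bullet> S' + \<tau> * gauss_neg_entropy S') / (1 - \<gamma>)
    = a0 + a1 * (Mmat B D \<bullet> S') + a2 * (R \<bullet> S') + a3 * ln (det S')" for S' :: "real^'n^'n"
    unfolding a0_def a1_def a2_def a3_def discounted_moment_def gauss_neg_entropy_def
      Dn_def[symmetric] e_def[symmetric]
    using Dn e by (simp add: field_simps)
  have "((\<lambda>S'. a0 + a1 * (Mmat B D \<bullet> S') + a2 * (R \<bullet> S') + a3 * ln (det S')) has_derivative
      (\<lambda>H. 0 + a1 * (Mmat B D \<bullet> H) + a2 * (R \<bullet> H) + a3 * (matrix_inv S \<bullet> H))) (at S within X)"
    by (intro has_derivative_add has_derivative_mult_right has_derivative_const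
        has_derivative_inner_right has_derivative_ident has_derivative_ln_det[OF S])
  moreover have "0 + a1 * (Mmat B D \<bullet> H) + a2 * (R \<bullet> H) + a3 * (matrix_inv S \<bullet> H)
    = ((1 / e) *\<^sub>R (transpose (R + (\<gamma> * PK \<gamma> A B C D Q R K) *\<^sub>R Mmat B D)
        - (\<tau> / 2) *\<^sub>R matrix_inv S)) \<bullet> H" for H
  proof -
    have "transpose (R + (\<gamma> * PK \<gamma> A B C D Q R K) *\<^sub>R Mmat B D) = R + (\<gamma> * (N / Dn)) *\<^sub>R Mmat B D"
      using R Mmat_symmetric[of B D]
      by (simp add: PK_def N_def Dn_def transpose_def vec_eq_iff)
    then show ?thesis
      using Dn e unfolding a1_def a2_def a3_def
      by (simp add: inner_add_left inner_diff_left field_simps)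
  qed
  ultimately show ?thesis
    unfolding N_def[symmetric] affine e_def by simp
qed

lemma eventually_discount_VK_lt:
  assumes "\<gamma> * VK A B C D K < 1"
  shows "\<forall>\<^sub>F K' in at K. \<gamma> * VK A B C D K' < 1"
proof -
  have "continuous (at K) (VK A B C D)"
    by (rule has_derivative_continuous[OF has_derivative_VK])
  then have "((\<lambda>K'. \<gamma> * VK A B C D K') \<longlongrightarrow> \<gamma> * VK A B C D K) (at K)"
    by (intro tendsto_mult_left) (simp add: continuous_at)
  then show ?thesis
    using assms by (rule order_tendstoD(2))
qed

context lqr_noise
begin

lemma has_derivative_cost_f_K:
  assumes R: "transpose R = R" and S: "pos_def_mat S" and \<gamma>: "0 \<le> \<gamma>" "\<gamma> < 1"
    and V: "\<gamma> * VK A B C D K < 1"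
  shows "((\<lambda>K'. cost_f M A B C D Q R \<gamma> \<tau> x0 wx wu xi K' S) has_derivative
      (\<lambda>h. (S_KS M A B C D \<gamma> x0 wx wu xi K S *\<^sub>R EK \<gamma> A B C D Q R K) \<bullet> h)) (at K)"
proof -
  have "\<forall>\<^sub>F K' in at K. (Q + K' \<bullet> (R *v K')) * discounted_moment (\<integral>\<omega>. (x0 \<omega>)\<^sup>2 \<partial>M) \<gamma> (Mmat B D \<bullet> S)
      (VK A B C D K') + (R \<bullet> S + \<tau> * gauss_neg_entropy S) / (1 - \<gamma>)
    = cost_f M A B C D Q R \<gamma> \<tau> x0 wx wu xi K' S"
    using eventually_discount_VK_lt[OF V] by eventually_elim (simp add: cost_f_closed_form[OF S \<gamma>])
  from has_derivative_transform_eventually[OF has_derivative_closed_form_K[OF R V] this]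
  show ?thesis
    by (simp add: cost_f_closed_form[OF S \<gamma> V] S_KS_closed_form[OF S \<gamma> V])
qed

lemma has_derivative_cost_f_S:
  assumes R: "transpose R = R" and S: "pos_def_mat S" and \<gamma>: "0 \<le> \<gamma>" "\<gamma> < 1"
    and V: "\<gamma> * VK A B C D K < 1"
  shows "((\<lambda>S'. cost_f M A B C D Q R \<gamma> \<tau> x0 wx wu xi K S') has_derivative
      (\<lambda>H. ((1 / (1 - \<gamma>)) *\<^sub>R (transpose (R + (\<gamma> * PK \<gamma> A B C D Q R K) *\<^sub>R Mmat B D)
        - (\<tau> / 2) *\<^sub>R matrix_inv S)) \<bullet> H)) (at S within {S'. transpose S' = S'})"
proof -
  have "\<forall>\<^sub>F S' in at S within {S'. transpose S' = S'}.
      (Q + K \<bullet> (R *v K)) * discounted_moment (\<integral>\<omega>. (x0 \<omega>)\<^sup>2 \<partial>M) \<gamma> (Mmat B D \<bullet> S') (VK A B C D K)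
        + (R \<bullet> S' + \<tau> * gauss_neg_entropy S') / (1 - \<gamma>)
      = cost_f M A B C D Q R \<gamma> \<tau> x0 wx wu xi K S'"
    using eventually_pos_def_mat[OF S] by eventually_elim (simp add: cost_f_closed_form[OF _ \<gamma> V])
  from has_derivative_transform_eventually[OF has_derivative_closed_form_S[OF R S \<gamma>(2) V] this]
  show ?thesis
    using S by (simp add: cost_f_closed_form[OF S \<gamma> V] pos_def_mat_def)
qed

end

theorem lemma3:
  fixes M :: "'a measure"
    and A C Q \<gamma> \<tau> :: real
    and B K :: "real^'n"
    and D R S :: "real^'n^'n"
    and x0 :: "'a \<Rightarrow> real" and wx :: "nat \<Rightarrow> 'a \<Rightarrow> real"
    and wu xi :: "nat \<Rightarrow> 'a \<Rightarrow> real^'n"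
  assumes "prob_space M"
    and "0 < \<gamma>" "\<gamma> < 1" "0 < \<tau>"
    and "transpose R = R"
    and "x0 \<in> borel_measurable M" "integrable M (\<lambda>\<omega>. (x0 \<omega>)\<^sup>2)"
    and "\<And>t. wx t \<in> borel_measurable M" "\<And>t. wu t \<in> borel_measurable M"
    and "\<And>t. xi t \<in> borel_measurable M"
    and "prob_space.indep_vars M (\<lambda>_. borel) (srcvar x0 wx wu xi) UNIV"
    and "\<And>t. integrable M (\<lambda>\<omega>. (wx t \<omega>)\<^sup>2)"
    and "\<And>t. (\<integral>\<omega>. wx t \<omega> \<partial>M) = 0" "\<And>t. (\<integral>\<omega>. (wx t \<omega>)\<^sup>2 \<partial>M) = 1"
    and "\<And>t i. integrable M (\<lambda>\<omega>. (wu t \<omega> $ i)\<^sup>2)"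
    and "\<And>t i. (\<integral>\<omega>. wu t \<omega> $ i \<partial>M) = 0"
    and "\<And>t i j. (\<integral>\<omega>. wu t \<omega> $ i * wu t \<omega> $ j \<partial>M) = (if i = j then 1 else 0)"
    and "\<And>t. prob_space.indep_vars M (\<lambda>_. borel) (\<lambda>i \<omega>. xi t \<omega> $ i) UNIV"
    and "\<And>t i. distributed M lborel (\<lambda>\<omega>. xi t \<omega> $ i) std_normal_density"
    and "(K, S) \<in> Omega \<gamma> A B C D"
  shows "((\<lambda>K'. cost_f M A B C D Q R \<gamma> \<tau> x0 wx wu xi K' S) has_derivative
            (\<lambda>h. (S_KS M A B C D \<gamma> x0 wx wu xi K S *\<^sub>R EK \<gamma> A B C D Q R K) \<bullet> h)) (at K) \<and>
         ((\<lambda>S'. cost_f M A B C D Q R \<gamma> \<tau> x0 wx wu xi K S') has_derivative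
            (\<lambda>H. \<Sum>i\<in>UNIV. \<Sum>j\<in>UNIV.
               ((1 / (1 - \<gamma>)) *\<^sub>R (transpose (R + (\<gamma> * PK \<gamma> A B C D Q R K) *\<^sub>R Mmat B D)
                  - (\<tau> / 2) *\<^sub>R matrix_inv S)) $ i $ j * H $ i $ j))
          (at S within {S'. transpose S' = S'})"
proof -
  interpret lqr_noise M x0 wx wu xi
    using assms by (simp add: lqr_noise_def lqr_noise_axioms_def indep_sources_def indep_sources_axioms_def)
  have S: "pos_def_mat S" and V: "\<gamma> * VK A B C D K < 1"
    using assms(20) by (auto simp: Omega_def)
  have \<gamma>: "0 \<le> \<gamma>" "\<gamma> < 1"
    using assms(2,3) by simp_all
  show ?thesis
    using has_derivative_cost_f_K[OF assms(5) S \<gamma> V] has_derivative_cost_f_S[OF assms(5) S \<gamma> V]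
    unfolding inner_matrix_eq by blast
qed

end
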